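(* For every $n\ge 1$, the peak algebra $\mathcal{P}_n$ is a subalgebra of the descent algebra $\Sigma(A_{n-1})$ of $\mathfrak{S}_n$. Moreover, $\mathcal{P}_n=\varphi(\Sigma(B_n))=\psi(\Sigma(D_n))$.
   Context: $[m]=\{1,\dots,m\}$. $\mathfrak{S}_n$ is the symmetric group; $u\in\mathfrak{S}_n$ is written $u_1\dots u_n$ with $u_i=u(i)$; group algebras are over $\mathbb{Q}$ with product given by composition $(uv)(i)=u(v(i))$. For $u\in\mathfrak{S}_n$, $\mathrm{Des}(u)=\{i\in[n-1]: u_i>u_{i+1}\}$, and for $J\subseteq[n-1]$, $Y_J=\sum_{\mathrm{Des}(u)=J}u$; $\Sigma(A_{n-1})$ is the span of the $Y_J$. $B_n$ is the group of signed permutations: bijections $w$ of $\{\pm1,\dots,\pm n\}$ with $w(-i)=-w(i)$, written $w_1\dots w_n$, $w_i=w(i)$; these values are ordered $\cdots<-2<-1<1<2<\cdots$ and one sets $w_0=0$. $\mathrm{Des}(w)=\{i\in\{0,\dots,n-1\}: w_i>w_{i+1}\}$, and $\Sigma(B_n)$ is the span in $\mathbb{Q}B_n$ of $Y_J=\sum_{\mathrm{Des}(w)=J}w$, $J\subseteq\{0,\dots,n-1\}$. $D_n\subseteq B_n$ is the subgroup of signed permutations with an even number of negative entries; for $w\in D_n$, its descent set is the subset of $\{1',1,2,\dots,n-1\}$ where $1'$ is a descent iff $-w_1>w_2$ and $i\in[n-1]$ is a descent iff $w_i>w_{i+1}$; $\Sigma(D_n)$ is the span of $Y_J=\sum_{\mathrm{Des}(w)=J}w$,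 $J\subseteq\{1',1,\dots,n-1\}$. $\varphi:\mathbb{Q}B_n\to\mathbb{Q}\mathfrak{S}_n$ is the linear extension of forgetting signs, $w\mapsto |w_1|\dots|w_n|$, and $\psi$ is its restriction to $\mathbb{Q}D_n$. For $u\in\mathfrak{S}_n$, $\mathrm{Peak}(u)=\{i\in[n-1]: u_{i-1}<u_i>u_{i+1}\}$ with convention $u_0=0$. $\mathcal{F}_n$ is the set of subsets of $[n-1]$ containing no two consecutive integers, $P_F=\sum_{\mathrm{Peak}(u)=F}u$ for $F\in\mathcal{F}_n$, and $\mathcal{P}_n=\mathrm{span}\{P_F: F\in\mathcal{F}_n\}$. *)

theory Defs
  imports Complex_Main
begin

text \<open>Permutations u in S_n are words (lists) u_1...u_n; u_i = u ! (i-1).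
  Signed permutations are int lists. Elements of group algebras over Q are
  functions from words to rat (supported on the group).\<close>

definition perms :: "nat \<Rightarrow> nat list set" where
  "perms n = {u. length u = n \<and> set u = {1..n}}"

definition sperms :: "nat \<Rightarrow> int list set" where
  "sperms n = {w. length w = n \<and> set (map (\<lambda>x. nat \<bar>x\<bar>) w) = {1..n}}"

definition dperms :: "nat \<Rightarrow> int list set" where
  "dperms n = {w \<in> sperms n. even (length (filter (\<lambda>x. x < 0) w))}"

definition compose :: "nat list \<Rightarrow> nat list \<Rightarrow> nat list" where
  "compose u v = map (\<lambda>j. u ! (j - 1)) v"

definition idperm :: "nat \<Rightarrow> nat list" where
  "idperm n = [1..<n+1]"

definition unitA :: "nat \<Rightarrow> nat list \<Rightarrow> rat" where
  "unitA n = (\<lambda>u. if u = idperm n then 1 else 0)"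

definition multA :: "nat \<Rightarrow> (nat list \<Rightarrow> rat) \<Rightarrow> (nat list \<Rightarrow> rat) \<Rightarrow> nat list \<Rightarrow> rat" where
  "multA n f g = (\<lambda>w. \<Sum>u\<in>perms n. \<Sum>v\<in>perms n.
      if compose u v = w then f u * g v else 0)"

definition valA :: "nat list \<Rightarrow> nat \<Rightarrow> nat" where
  "valA u i = (if i = 0 then 0 else u ! (i - 1))"

definition valB :: "int list \<Rightarrow> nat \<Rightarrow> int" where
  "valB w i = (if i = 0 then 0 else w ! (i - 1))"

definition DesA :: "nat \<Rightarrow> nat list \<Rightarrow> nat set" where
  "DesA n u = {i \<in> {1..n-1}. valA u i > valA u (i+1)}"

definition DesB :: "nat \<Rightarrow> int list \<Rightarrow> nat set" where
  "DesB n w = {i \<in> {0..n-1}. valB w i > valB w (i+1)}"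

text \<open>Type D descent set; the index 1' is encoded as 0. 1' is only an index when n \<ge> 2.\<close>
definition DesD :: "nat \<Rightarrow> int list \<Rightarrow> nat set" where
  "DesD n w = {i \<in> {1..n-1}. valB w i > valB w (i+1)}
     \<union> (if n \<ge> 2 \<and> - valB w 1 > valB w 2 then {0} else {})"

definition YA :: "nat \<Rightarrow> nat set \<Rightarrow> nat list \<Rightarrow> rat" where
  "YA n J = (\<lambda>u. if u \<in> perms n \<and> DesA n u = J then 1 else 0)"

definition YB :: "nat \<Rightarrow> nat set \<Rightarrow> int list \<Rightarrow> rat" where
  "YB n J = (\<lambda>w. if w \<in> sperms n \<and> DesB n w = J then 1 else 0)"

definition YD :: "nat \<Rightarrow> nat set \<Rightarrow> int list \<Rightarrow> rat" where
  "YD n J = (\<lambda>w. if w \<in> dperms n \<and> DesD n w = J then 1 else 0)"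

definition SigmaA :: "nat \<Rightarrow> (nat list \<Rightarrow> rat) set" where
  "SigmaA n = {f. \<exists>c. f = (\<lambda>u. \<Sum>J\<in>Pow {1..n-1}. c J * YA n J u)}"

definition SigmaB :: "nat \<Rightarrow> (int list \<Rightarrow> rat) set" where
  "SigmaB n = {f. \<exists>c. f = (\<lambda>w. \<Sum>J\<in>Pow {0..n-1}. c J * YB n J w)}"

text \<open>index set {1',1,...,n-1} with 1' encoded as 0 (for n = 1 it is just [n-1] = {})\<close>
definition DIdx :: "nat \<Rightarrow> nat set" where
  "DIdx n = (if n \<ge> 2 then {0..n-1} else {})"

definition SigmaD :: "nat \<Rightarrow> (int list \<Rightarrow> rat) set" where
  "SigmaD n = {f. \<exists>c. f = (\<lambda>w. \<Sum>J\<in>Pow (DIdx n). c J * YD n J w)}"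

definition forget :: "int list \<Rightarrow> nat list" where
  "forget w = map (\<lambda>x. nat \<bar>x\<bar>) w"

definition phi :: "nat \<Rightarrow> (int list \<Rightarrow> rat) \<Rightarrow> nat list \<Rightarrow> rat" where
  "phi n f = (\<lambda>u. \<Sum>w\<in>{w \<in> sperms n. forget w = u}. f w)"

definition psi :: "nat \<Rightarrow> (int list \<Rightarrow> rat) \<Rightarrow> nat list \<Rightarrow> rat" where
  "psi n f = (\<lambda>u. \<Sum>w\<in>{w \<in> dperms n. forget w = u}. f w)"

definition Peak :: "nat \<Rightarrow> nat list \<Rightarrow> nat set" where
  "Peak n u = {i \<in> {1..n-1}. valA u (i-1) < valA u i \<and> valA u i > valA u (i+1)}"

definition Fn :: "nat \<Rightarrow> nat set set" where
  "Fn n = {F. F \<subseteq> {1..n-1} \<and> (\<forall>i\<in>F. i + 1 \<notin> F)}"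

definition PF :: "nat \<Rightarrow> nat set \<Rightarrow> nat list \<Rightarrow> rat" where
  "PF n F = (\<lambda>u. if u \<in> perms n \<and> Peak n u = F then 1 else 0)"

definition PeakAlg :: "nat \<Rightarrow> (nat list \<Rightarrow> rat) set" where
  "PeakAlg n = {f. \<exists>c. f = (\<lambda>u. \<Sum>F\<in>Fn n. c F * PF n F u)}"

end

(* Over a permutation u, the signed permutations w with |w| = u are the 2^n sign choices, and
   whether w descends at i is decided by the sign of the entry of larger absolute value among
   w(i), w(i+1).  Counting sign choices shows that the number of lifts of u with descent set J
   depends only on J and the peak set of u, in type B as well as in type D.  Hence phi(Sigma(B_n))
   and psi(Sigma(D_n)) consist of functions of the peak set, and the images of Y_J for the sets J
   that toggle exactly at the elements of a peak set F are unitriangular in the P_G, so both images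
   are all of the peak algebra.

   Since forgetting signs is multiplicative, closure under the product reduces to Solomon's theorem
   that Sigma(B_n) is a subalgebra.  It is proved with the Tits product of faces of the Coxeter
   complex of B_n: X_J X_K evaluated at y counts pairs of faces of types J and K whose product,
   followed by the fundamental chamber, is the chamber of y, and translating by the group this only
   depends on the descent set of y. *)

theory Submission
  imports Defs
begin

section \<open>Class functions and linearly closed sets of functions\<close>

definition class_fun :: "'a set \<Rightarrow> ('a \<Rightarrow> 'b) \<Rightarrow> ('a \<Rightarrow> rat) set" where
  "class_fun P k = {f. (\<forall>u. u \<notin> P \<longrightarrow> f u = 0) \<and> (\<forall>u\<in>P. \<forall>v\<in>P. k u = k v \<longrightarrow> f u = f v)}"

lemma class_funI:
  assumes "\<And>u. u \<notin> P \<Longrightarrow> f u = 0" and "\<And>u v. u \<in> P \<Longrightarrow> v \<in> P \<Longrightarrow> k u = k v \<Longrightarrow> f u = f v"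
  shows "f \<in> class_fun P k"
  using assms unfolding class_fun_def by blast

lemma class_funD:
  assumes "f \<in> class_fun P k"
  shows "u \<notin> P \<Longrightarrow> f u = 0" and "u \<in> P \<Longrightarrow> v \<in> P \<Longrightarrow> k u = k v \<Longrightarrow> f u = f v"
  using assms unfolding class_fun_def by blast+

lemma class_fun_mono:
  assumes "\<And>u v. u \<in> P \<Longrightarrow> v \<in> P \<Longrightarrow> k u = k v \<Longrightarrow> k' u = k' v"
  shows "class_fun P k' \<subseteq> class_fun P k"
  using assms unfolding class_fun_def by blast

lemma sum_indicator_fibre:
  assumes "finite I" and "k ` P \<subseteq> I"
  shows "(\<Sum>J\<in>I. c J * (if u \<in> P \<and> k u = J then 1 else 0)) = (if u \<in> P then c (k u) else (0::rat))"
proof -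
  have "(\<Sum>J\<in>I. c J * (if u \<in> P \<and> k u = J then 1 else 0))
      = (\<Sum>J\<in>I. if u \<in> P \<and> k u = J then c J else 0)"
    by (rule sum.cong) auto
  also have "\<dots> = (if u \<in> P then c (k u) else 0)"
    using assms by (auto simp: sum.delta' cong: conj_cong)
  finally show ?thesis .
qed

lemma span_indicators_eq_class_fun:
  assumes fin: "finite I" and range: "k ` P \<subseteq> I"
  shows "{f. \<exists>c. f = (\<lambda>u. \<Sum>J\<in>I. c J * (if u \<in> P \<and> k u = J then 1 else 0))} = class_fun P k"
proof (intro set_eqI iffI)
  fix f assume "f \<in> {f. \<exists>c. f = (\<lambda>u. \<Sum>J\<in>I. c J * (if u \<in> P \<and> k u = J then 1 else (0::rat)))}"
  then obtain c where f: "f = (\<lambda>u. \<Sum>J\<in>I. c J * (if u \<in> P \<and> k u = J then 1 else 0))"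
    by blast
  have "f u = (if u \<in> P then c (k u) else 0)" for u
    unfolding f by (rule sum_indicator_fibre[OF fin range])
  then show "f \<in> class_fun P k"
    by (intro class_funI) simp_all
next
  fix f assume f: "f \<in> class_fun P k"
  define c where "c J = f (SOME u. u \<in> P \<and> k u = J)" for J
  have "f u = c (k u)" if "u \<in> P" for u
  proof -
    have "(SOME v. v \<in> P \<and> k v = k u) \<in> P \<and> k (SOME v. v \<in> P \<and> k v = k u) = k u"
      using someI_ex[of "\<lambda>v. v \<in> P \<and> k v = k u"] that by blast
    then show ?thesis unfolding c_def using class_funD(2)[OF f that] by metis
  qed
  then have "f u = (\<Sum>J\<in>I. c J * (if u \<in> P \<and> k u = J then 1 else 0))" for u
    using class_funD(1)[OF f, of u] unfolding sum_indicator_fibre[OF fin range] by simp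
  then have "f = (\<lambda>u. \<Sum>J\<in>I. c J * (if u \<in> P \<and> k u = J then 1 else 0))" ..
  then show "f \<in> {f. \<exists>c. f = (\<lambda>u. \<Sum>J\<in>I. c J * (if u \<in> P \<and> k u = J then 1 else 0))}"
    by blast
qed

definition lin_closed :: "('a \<Rightarrow> rat) set \<Rightarrow> bool" where
  "lin_closed V \<longleftrightarrow> (\<lambda>u. 0) \<in> V \<and> (\<forall>f\<in>V. \<forall>g\<in>V. (\<lambda>u. f u + g u) \<in> V)
     \<and> (\<forall>f\<in>V. \<forall>a. (\<lambda>u. a * f u) \<in> V)"

lemma lin_closedI:
  assumes "(\<lambda>u. 0) \<in> V" and "\<And>f g. f \<in> V \<Longrightarrow> g \<in> V \<Longrightarrow> (\<lambda>u. f u + g u) \<in> V"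
    and "\<And>f a. f \<in> V \<Longrightarrow> (\<lambda>u. a * f u) \<in> V"
  shows "lin_closed V"
  using assms unfolding lin_closed_def by blast

lemma lin_closedD:
  assumes "lin_closed V"
  shows lin_closed_zero: "(\<lambda>u. 0) \<in> V"
    and lin_closed_add: "f \<in> V \<Longrightarrow> g \<in> V \<Longrightarrow> (\<lambda>u. f u + g u) \<in> V"
    and lin_closed_smult: "f \<in> V \<Longrightarrow> (\<lambda>u. a * f u) \<in> V"
  using assms unfolding lin_closed_def by blast+

lemma lin_closed_class_fun: "lin_closed (class_fun P k)"
proof (rule lin_closedI)
  fix f g a assume f: "f \<in> class_fun P k" and g: "g \<in> class_fun P k"
  show "(\<lambda>u. f u + g u) \<in> class_fun P k"
  proof (rule class_funI)
    show "f u + g u = 0" if "u \<notin> P" for u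
      using class_funD(1)[OF f that] class_funD(1)[OF g that] by simp
    show "f u + g u = f v + g v" if "u \<in> P" "v \<in> P" "k u = k v" for u v
      using class_funD(2)[OF f that] class_funD(2)[OF g that] by simp
  qed
next
  fix f a assume f: "f \<in> class_fun P k"
  show "(\<lambda>u. a * f u) \<in> class_fun P k"
  proof (rule class_funI)
    show "a * f u = 0" if "u \<notin> P" for u
      using class_funD(1)[OF f that] by simp
    show "a * f u = a * f v" if "u \<in> P" "v \<in> P" "k u = k v" for u v
      using class_funD(2)[OF f that] by simp
  qed
qed (rule class_funI; simp)

lemma lin_closed_sum:
  assumes V: "lin_closed V" and "finite A" and "\<And>x. x \<in> A \<Longrightarrow> g x \<in> V"
  shows "(\<lambda>u. \<Sum>x\<in>A. c x * g x u) \<in> V"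
  using assms(2,3)
proof (induction A rule: finite_induct)
  case empty
  then show ?case using lin_closed_zero[OF V] by simp
next
  case (insert x F)
  have "(\<lambda>u. c x * g x u) \<in> V" using insert lin_closed_smult[OF V] by blast
  from lin_closed_add[OF V this] insert show ?case by simp
qed

lemma lin_closed_image:
  assumes V: "lin_closed V"
    and add: "\<And>f g. T (\<lambda>u. f u + g u) = (\<lambda>u. T f u + T g u)"
    and smult: "\<And>f a. T (\<lambda>u. a * f u) = (\<lambda>u. a * T f u)"
  shows "lin_closed (T ` V)"
proof (rule lin_closedI)
  have "T (\<lambda>u. 0) = (\<lambda>u. 0)" using smult[of 0 "\<lambda>u. 0"] by simp
  then show "(\<lambda>u. 0) \<in> T ` V" using lin_closed_zero[OF V] by force
next
  fix f g assume "f \<in> T ` V" "g \<in> T ` V"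
  then obtain f' g' where "f' \<in> V" "g' \<in> V" "f = T f'" "g = T g'" by blast
  then show "(\<lambda>u. f u + g u) \<in> T ` V"
    using lin_closed_add[OF V, of f' g'] add[of f' g'] by force
next
  fix f a assume "f \<in> T ` V"
  then obtain f' where "f' \<in> V" "f = T f'" by blast
  then show "(\<lambda>u. a * f u) \<in> T ` V"
    using lin_closed_smult[OF V, of f' a] smult[of a f'] by force
qed

lemma lin_closed_triangular:
  assumes V: "lin_closed V"
    and down: "\<And>F G. F \<in> Fam \<Longrightarrow> G \<subseteq> F \<Longrightarrow> G \<in> Fam"
    and fin: "\<And>F. F \<in> Fam \<Longrightarrow> finite F"
    and lead: "\<And>F. F \<in> Fam \<Longrightarrow> \<exists>a. a F \<noteq> 0 \<and> (\<lambda>u. \<Sum>G\<in>Pow F. a G * Y G u) \<in> V"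
    and F: "F \<in> Fam"
  shows "Y F \<in> V"
  using F
proof (induction "card F" arbitrary: F rule: less_induct)
  case less
  obtain a where a: "a F \<noteq> 0" "(\<lambda>u. \<Sum>G\<in>Pow F. a G * Y G u) \<in> V"
    using lead[OF less.prems] by blast
  have finF: "finite F" using fin less.prems by blast
  have "Y G \<in> V" if "G \<in> Pow F - {F}" for G
  proof (rule less.hyps)
    show "card G < card F" using that finF by (auto intro: psubset_card_mono)
    show "G \<in> Fam" using down[OF less.prems] that by auto
  qed
  then have lower: "(\<lambda>u. \<Sum>G\<in>Pow F - {F}. (- a G) * Y G u) \<in> V"
    using finF by (intro lin_closed_sum[OF V]) auto
  have split: "(\<Sum>G\<in>Pow F. a G * Y G u) + (\<Sum>G\<in>Pow F - {F}. (- a G) * Y G u) = a F * Y F u" for u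
    using finF by (simp add: sum.remove[of _ F] sum_negf)
  have "(\<lambda>u. inverse (a F) * (a F * Y F u)) \<in> V"
    using lin_closed_smult[OF V lin_closed_add[OF V a(2) lower]] by (simp only: split)
  moreover have "(\<lambda>u. inverse (a F) * (a F * Y F u)) = Y F" using a(1) by (simp add: fun_eq_iff)
  ultimately show ?case by simp
qed

section \<open>Permutations, descents and peaks\<close>

lemma permsD:
  assumes "u \<in> perms n"
  shows "length u = n" and "set u = {1..n}" and "distinct u"
proof -
  show "length u = n" "set u = {1..n}" using assms unfolding perms_def by auto
  then show "distinct u" by (simp add: card_distinct)
qed

lemma perms_nth:
  assumes "u \<in> perms n" and "i < n"
  shows "1 \<le> u ! i" and "u ! i \<le> n"
  using assms nth_mem[of i u] permsD[OF assms(1)] by auto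

lemma perms_nth_inj:
  assumes "u \<in> perms n" and "i < n" and "j < n" and "u ! i = u ! j"
  shows "i = j"
  using assms permsD[OF assms(1)] nth_eq_iff_index_eq by metis

lemma finite_perms: "finite (perms n)"
proof -
  have "perms n \<subseteq> {xs. set xs \<subseteq> {1..n} \<and> length xs = n}" unfolding perms_def by auto
  then show ?thesis by (rule finite_subset) (simp add: finite_lists_length_eq)
qed

lemma valA_pos:
  assumes "u \<in> perms n" and "1 \<le> i" and "i \<le> n"
  shows "1 \<le> valA u i"
  using assms perms_nth[OF assms(1), of "i - 1"] unfolding valA_def by auto

lemma valA_neq_Suc:
  assumes u: "u \<in> perms n" and i: "i < n"
  shows "valA u i \<noteq> valA u (i + 1)"
proof (cases "i = 0")
  case True
  then show ?thesis using valA_pos[OF u, of 1] i by (auto simp: valA_def)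
next
  case False
  then have "i - 1 < n" and "i - 1 \<noteq> i" using i by auto
  then show ?thesis using perms_nth_inj[OF u _ i, of "i - 1"] False by (auto simp: valA_def)
qed

lemma Peak_eq_DesA:
  assumes u: "u \<in> perms n"
  shows "Peak n u = {i \<in> {1..n-1}. i \<in> DesA n u \<and> (i = 1 \<or> i - 1 \<notin> DesA n u)}"
proof -
  have "valA u (i - 1) < valA u i \<longleftrightarrow> i = 1 \<or> i - 1 \<notin> DesA n u" if i: "i \<in> {1..n-1}" for i
  proof (cases "i = 1")
    case True
    then have "1 \<le> n" using i by auto
    then show ?thesis using valA_pos[OF u order.refl] True by (simp add: valA_def)
  next
    case False
    then have "valA u (i - 1) \<noteq> valA u (i - 1 + 1)" using i by (intro valA_neq_Suc[OF u]) auto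
    then show ?thesis using False i unfolding DesA_def by auto
  qed
  then show ?thesis unfolding Peak_def DesA_def by auto
qed

lemma Peak_subset: "Peak n u \<subseteq> {1..n-1}"
  unfolding Peak_def by auto

lemma Peak_in_Fn: "Peak n u \<in> Fn n"
  unfolding Fn_def Peak_def by auto

lemma finite_Fn: "finite (Fn n)"
  by (rule finite_subset[of _ "Pow {1..n-1}"]) (auto simp: Fn_def)

lemma Fn_downward_closed: "F \<in> Fn n \<Longrightarrow> G \<subseteq> F \<Longrightarrow> G \<in> Fn n"
  unfolding Fn_def by auto

lemma finite_in_Fn: "F \<in> Fn n \<Longrightarrow> finite F"
  unfolding Fn_def using finite_subset by blast

lemma PeakAlg_eq_class_fun: "PeakAlg n = class_fun (perms n) (Peak n)"
  unfolding PeakAlg_def PF_def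
  using span_indicators_eq_class_fun[OF finite_Fn, of "Peak n" "perms n"] Peak_in_Fn
  by auto

lemma SigmaA_eq_class_fun: "SigmaA n = class_fun (perms n) (DesA n)"
  unfolding SigmaA_def YA_def
  by (subst span_indicators_eq_class_fun[symmetric]) (auto simp: DesA_def)

lemma PeakAlg_subset_SigmaA: "PeakAlg n \<subseteq> SigmaA n"
  unfolding PeakAlg_eq_class_fun SigmaA_eq_class_fun
  by (rule class_fun_mono) (simp add: Peak_eq_DesA)

lemma idperm_in_perms: "idperm n \<in> perms n"
  unfolding idperm_def perms_def by auto

lemma Peak_idperm: "Peak n (idperm n) = {}"
  unfolding Peak_def valA_def idperm_def by (auto simp: nth_append)

lemma Peak_empty_imp_idperm:
  assumes u: "u \<in> perms n" and no_peak: "Peak n u = {}"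
  shows "u = idperm n"
proof -
  have asc: "valA u i < valA u (i + 1)" if "i < n" for i
    using that
  proof (induction i)
    case 0
    then show ?case using valA_pos[OF u, of 1] by (simp add: valA_def)
  next
    case (Suc i)
    then have "Suc i \<notin> Peak n u" "valA u i < valA u (Suc i)" using no_peak by auto
    then show ?case using valA_neq_Suc[OF u Suc.prems] Suc.prems unfolding Peak_def by auto
  qed
  have "sorted_wrt (<) u"
    unfolding sorted_wrt_iff_nth_Suc_transp[OF transp_on_less]
    using asc[of "Suc _"] permsD(1)[OF u] by (simp add: valA_def)
  moreover have "sorted_wrt (<) (idperm n)" unfolding idperm_def by (rule sorted_wrt_upt)
  moreover have "set u = set (idperm n)"
    using permsD(2)[OF u] unfolding idperm_def set_upt
    by (simp add: atLeastLessThanSuc_atLeastAtMost)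
  ultimately show ?thesis using strict_sorted_equal by blast
qed

lemma unitA_in_PeakAlg: "unitA n \<in> PeakAlg n"
proof -
  have "u = idperm n \<longleftrightarrow> Peak n u = {}" if "u \<in> perms n" for u
    using that Peak_empty_imp_idperm Peak_idperm by metis
  then show ?thesis
    unfolding PeakAlg_eq_class_fun unitA_def using idperm_in_perms by (auto intro!: class_funI)
qed

section \<open>Counting signed lifts of a permutation\<close>

definition choice_lists :: "nat \<Rightarrow> (nat \<Rightarrow> 'a set) \<Rightarrow> 'a list set" where
  "choice_lists n A = {xs. length xs = n \<and> (\<forall>k<n. xs ! k \<in> A k)}"

lemma choice_lists_0: "choice_lists 0 A = {[]}"
  unfolding choice_lists_def by auto

lemma choice_lists_Suc:
  "choice_lists (Suc n) A = (\<lambda>(x, xs). x # xs) ` (A 0 \<times> choice_lists n (\<lambda>k. A (Suc k)))"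
proof (intro set_eqI iffI)
  fix xs assume xs: "xs \<in> choice_lists (Suc n) A"
  then obtain x ys where "xs = x # ys" unfolding choice_lists_def by (cases xs) auto
  with xs show "xs \<in> (\<lambda>(x, xs). x # xs) ` (A 0 \<times> choice_lists n (\<lambda>k. A (Suc k)))"
    unfolding choice_lists_def by force
next
  fix xs assume "xs \<in> (\<lambda>(x, xs). x # xs) ` (A 0 \<times> choice_lists n (\<lambda>k. A (Suc k)))"
  then show "xs \<in> choice_lists (Suc n) A"
    unfolding choice_lists_def by (auto simp: less_Suc_eq_0_disj)
qed

lemma finite_choice_lists:
  "(\<And>k. k < n \<Longrightarrow> finite (A k)) \<Longrightarrow> finite (choice_lists n A)"
  by (induction n arbitrary: A) (simp_all add: choice_lists_0 choice_lists_Suc)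

lemma sum_prod_choice_lists:
  fixes f :: "nat \<Rightarrow> 'a \<Rightarrow> 'b::comm_semiring_1"
  assumes "\<And>k. k < n \<Longrightarrow> finite (A k)"
  shows "(\<Sum>xs\<in>choice_lists n A. \<Prod>k<n. f k (xs ! k)) = (\<Prod>k<n. \<Sum>x\<in>A k. f k x)"
  using assms
proof (induction n arbitrary: A f)
  case 0
  then show ?case by (simp add: choice_lists_0)
next
  case (Suc n)
  let ?T = "choice_lists n (\<lambda>k. A (Suc k))"
  have inj: "inj_on (\<lambda>(x, xs). x # xs) (A 0 \<times> ?T)"
    by (auto simp: inj_on_def)
  have "(\<Sum>xs\<in>choice_lists (Suc n) A. \<Prod>k<Suc n. f k (xs ! k))
      = (\<Sum>(x, xs)\<in>A 0 \<times> ?T. f 0 x * (\<Prod>k<n. f (Suc k) (xs ! k)))"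
    unfolding choice_lists_Suc sum.reindex[OF inj]
    by (intro sum.cong) (auto simp del: prod.lessThan_Suc simp: prod.lessThan_Suc_shift)
  also have "\<dots> = (\<Sum>x\<in>A 0. f 0 x) * (\<Sum>xs\<in>?T. \<Prod>k<n. f (Suc k) (xs ! k))"
    by (simp add: sum.cartesian_product[symmetric] sum_product)
  also have "\<dots> = (\<Prod>k<Suc n. \<Sum>x\<in>A k. f k x)"
    using Suc.IH[of "\<lambda>k. A (Suc k)" "\<lambda>k. f (Suc k)"] Suc.prems
    by (simp del: prod.lessThan_Suc add: prod.lessThan_Suc_shift)
  finally show ?case .
qed

lemma card_choice_lists:
  assumes "\<And>k. k < n \<Longrightarrow> finite (A k)"
  shows "card (choice_lists n A) = (\<Prod>k<n. card (A k))"
  using sum_prod_choice_lists[OF assms, where f="\<lambda>_ _. 1::nat"] by simp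

definition sign :: "int \<Rightarrow> rat" where
  "sign x = (if x < 0 then -1 else 1)"

abbreviation negs :: "int list \<Rightarrow> nat" where
  "negs w \<equiv> length (filter (\<lambda>x. x < 0) w)"

lemma prod_sign: "(\<Prod>k<length w. sign (w ! k)) = (-1) ^ negs w"
proof (induction w)
  case (Cons a w)
  have "(\<Prod>k<length (a # w). sign ((a # w) ! k)) = sign a * (\<Prod>k<length w. sign (w ! k))"
    by (simp only: length_Cons prod.lessThan_Suc_shift) simp
  then show ?case using Cons by (simp add: sign_def)
qed simp

text \<open>The signed count \<open>\<Sum>w. (-1)^negs w\<close> factors as \<open>\<Prod>k. \<Sum>x\<in>A k. sign x\<close>, which vanishes.\<close>
lemma card_even_negs_choice_lists:
  assumes fin: "\<And>k. k < n \<Longrightarrow> finite (A k)"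
    and balanced: "\<exists>k<n. (\<Sum>x\<in>A k. sign x) = 0"
  shows "2 * card {w \<in> choice_lists n A. even (negs w)} = card (choice_lists n A)"
proof -
  let ?L = "choice_lists n A"
  have "(\<Sum>w\<in>?L. \<Prod>k<n. sign (w ! k)) = (\<Prod>k<n. \<Sum>x\<in>A k. sign x)"
    by (rule sum_prod_choice_lists[OF fin])
  also have "\<dots> = 0"
    using balanced finite_lessThan by (auto simp: prod_zero_iff)
  finally have "(\<Sum>w\<in>?L. 1 + (\<Prod>k<n. sign (w ! k))) = of_nat (card ?L)"
    by (simp add: sum.distrib)
  moreover have "1 + (\<Prod>k<n. sign (w ! k)) = (if even (negs w) then 2 else 0)" if "w \<in> ?L" for w
  proof -
    have "length w = n" using that unfolding choice_lists_def by simp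
    then show ?thesis using prod_sign[of w] by simp
  qed
  ultimately have "(\<Sum>w\<in>?L. if even (negs w) then 2 else 0) = (of_nat (card ?L) :: rat)"
    by simp
  moreover have "(\<Sum>w\<in>?L. if even (negs w) then 2 else 0) = 2 * (of_nat (card {w \<in> ?L. even (negs w)}) :: rat)"
    using finite_choice_lists[OF fin] by (simp add: sum.If_cases Int_def)
  ultimately show ?thesis by linarith
qed

lemma card_rises_minus_card_falls:
  fixes b :: "nat \<Rightarrow> bool"
  shows "int (card {k. k < m \<and> \<not> b k \<and> b (Suc k)}) - int (card {k. k < m \<and> b k \<and> \<not> b (Suc k)})
         = (if b m then 1 else 0) - (if b 0 then 1 else 0)"
proof (induction m)
  case (Suc m)
  have rises: "{k. k < Suc m \<and> \<not> b k \<and> b (Suc k)}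
      = {k. k < m \<and> \<not> b k \<and> b (Suc k)} \<union> (if \<not> b m \<and> b (Suc m) then {m} else {})"
    and falls: "{k. k < Suc m \<and> b k \<and> \<not> b (Suc k)}
      = {k. k < m \<and> b k \<and> \<not> b (Suc k)} \<union> (if b m \<and> \<not> b (Suc m) then {m} else {})"
    by (auto simp: less_Suc_eq)
  show ?case using Suc unfolding rises falls by (auto simp: card_insert_if)
qed simp

abbreviation lifts :: "nat list \<Rightarrow> nat \<Rightarrow> int set" where
  "lifts u k \<equiv> {int (u ! k), - int (u ! k)}"

lemma forget_in_perms: "w \<in> sperms n \<Longrightarrow> forget w \<in> perms n"
  unfolding sperms_def perms_def forget_def by auto

lemma sperms_fibre_eq_choice_lists:
  assumes u: "u \<in> perms n"
  shows "{w \<in> sperms n. forget w = u} = choice_lists n (lifts u)"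
proof (intro set_eqI iffI)
  fix w assume "w \<in> {w \<in> sperms n. forget w = u}"
  then have len: "length w = n" and abs_eq: "\<And>k. k < n \<Longrightarrow> nat \<bar>w ! k\<bar> = u ! k"
    unfolding sperms_def forget_def by auto
  have "w ! k \<in> lifts u k" if "k < n" for k
    using abs_eq[OF that] by (cases "0 \<le> w ! k") auto
  with len show "w \<in> choice_lists n (lifts u)"
    unfolding choice_lists_def by simp
next
  fix w assume w: "w \<in> choice_lists n (lifts u)"
  then have "forget w = u"
    using permsD(1)[OF u] unfolding choice_lists_def forget_def by (auto intro!: nth_equalityI)
  with w permsD(2)[OF u] show "w \<in> {w \<in> sperms n. forget w = u}"
    unfolding sperms_def forget_def choice_lists_def by auto
qed

lemma finite_sperms_fibre: "finite {w \<in> sperms n. forget w = u}"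
proof (cases "u \<in> perms n")
  case True
  then show ?thesis by (simp add: sperms_fibre_eq_choice_lists finite_choice_lists)
next
  case False
  then have "{w \<in> sperms n. forget w = u} = {}" using forget_in_perms by blast
  then show ?thesis by (simp only: finite.emptyI)
qed

definition ascent :: "nat list \<Rightarrow> nat \<Rightarrow> bool" where
  "ascent u i \<longleftrightarrow> valA u i < valA u (i + 1)"

lemma ascent_0: "u \<in> perms n \<Longrightarrow> 1 \<le> n \<Longrightarrow> ascent u 0"
  using valA_pos[of u n 1] unfolding ascent_def by (simp add: valA_def)

lemma lift_descent_iff:
  assumes u: "u \<in> perms n" and w: "w \<in> choice_lists n (lifts u)" and i: "i < n"
  shows "valB w i > valB w (i + 1) \<longleftrightarrow> (if ascent u i then w ! i < 0 else 0 < w ! (i - 1))"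
proof (cases "i = 0")
  case True
  then show ?thesis using ascent_0[OF u] i by (simp add: valB_def)
next
  case False
  have "w ! (i - 1) \<in> lifts u (i - 1)" and "w ! i \<in> lifts u i"
    using w i unfolding choice_lists_def by auto
  moreover have "1 \<le> u ! (i - 1)" and "1 \<le> u ! i" using perms_nth[OF u] i by auto
  moreover have "valA u i \<noteq> valA u (i + 1)" by (rule valA_neq_Suc[OF u i])
  ultimately show ?thesis using False unfolding ascent_def valA_def valB_def by auto
qed

text \<open>The entries allowed at position \<open>k\<close> of a lift whose descents at the positions in \<open>I\<close>
  are prescribed by \<open>J\<close>: only the descents at \<open>k\<close> and \<open>k + 1\<close> involve the sign of the
  \<open>k\<close>-th entry.\<close>
definition admissible_lifts :: "nat \<Rightarrow> nat set \<Rightarrow> nat set \<Rightarrow> nat list \<Rightarrow> nat \<Rightarrow> int set" where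
  "admissible_lifts n I J u k = {x \<in> lifts u k.
       (ascent u k \<and> k \<in> I \<longrightarrow> (k \<in> J \<longleftrightarrow> x < 0))
     \<and> (k + 1 < n \<and> \<not> ascent u (k + 1) \<and> k + 1 \<in> I \<longrightarrow> (k + 1 \<in> J \<longleftrightarrow> 0 < x))}"

lemma finite_admissible_lifts: "finite (admissible_lifts n I J u k)"
  unfolding admissible_lifts_def by simp

lemma admissible_lifts_unconstrained:
  assumes "\<not> (ascent u k \<and> k \<in> I)" and "\<not> (k + 1 < n \<and> \<not> ascent u (k + 1) \<and> k + 1 \<in> I)"
  shows "admissible_lifts n I J u k = lifts u k"
  using assms unfolding admissible_lifts_def by auto

lemma descent_pattern_eq_choice_lists:
  assumes u: "u \<in> perms n" and I: "I \<subseteq> {..<n}" and n: "1 \<le> n"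
  shows "{w \<in> choice_lists n (lifts u). \<forall>i\<in>I. i \<in> J \<longleftrightarrow> valB w i > valB w (i + 1)}
    = choice_lists n (admissible_lifts n I J u)"
proof (intro set_eqI iffI)
  fix w assume "w \<in> {w \<in> choice_lists n (lifts u). \<forall>i\<in>I. i \<in> J \<longleftrightarrow> valB w i > valB w (i + 1)}"
  then have w: "w \<in> choice_lists n (lifts u)" and pattern: "\<forall>i\<in>I. i \<in> J \<longleftrightarrow> valB w i > valB w (i + 1)"
    by auto
  have "w ! k \<in> admissible_lifts n I J u k" if "k < n" for k
    using w that pattern lift_descent_iff[OF u w that] lift_descent_iff[OF u w, of "k + 1"]
    unfolding admissible_lifts_def choice_lists_def by auto
  then show "w \<in> choice_lists n (admissible_lifts n I J u)"
    using w unfolding choice_lists_def by simp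
next
  fix w assume adm: "w \<in> choice_lists n (admissible_lifts n I J u)"
  then have w: "w \<in> choice_lists n (lifts u)"
    unfolding choice_lists_def admissible_lifts_def by auto
  have "i \<in> J \<longleftrightarrow> valB w i > valB w (i + 1)" if i: "i \<in> I" for i
  proof (cases "ascent u i")
    case True
    then show ?thesis
      using adm i I lift_descent_iff[OF u w, of i] unfolding choice_lists_def admissible_lifts_def by auto
  next
    case False
    then have "i \<noteq> 0" using ascent_0[OF u n] by metis
    then have "w ! (i - 1) \<in> admissible_lifts n I J u (i - 1)" and "i - 1 + 1 = i"
      using adm i I unfolding choice_lists_def by auto
    then show ?thesis
      using False i I lift_descent_iff[OF u w, of i] unfolding admissible_lifts_def by auto
  qed
  then show "w \<in> {w \<in> choice_lists n (lifts u). \<forall>i\<in>I. i \<in> J \<longleftrightarrow> valB w i > valB w (i + 1)}"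
    using w by simp
qed

lemma card_admissible_lifts:
  assumes u: "u \<in> perms n" and k: "k < n"
  shows "card (admissible_lifts n I J u k) =
    (let left = (ascent u k \<and> k \<in> I); right = (k + 1 < n \<and> \<not> ascent u (k + 1) \<and> k + 1 \<in> I) in
     if left \<and> right then (if (k \<in> J) \<noteq> (k + 1 \<in> J) then 1 else 0)
     else if left \<or> right then 1 else 2)"
proof -
  have pos: "1 \<le> int (u ! k)" using perms_nth[OF u k] by simp
  have "card {x \<in> {a, -a}. Q x} = (if Q a then 1 else 0) + (if Q (-a) then 1 else 0)"
    if "(1::int) \<le> a" for a Q
  proof -
    have "{x \<in> {a, -a}. Q x} = (if Q a then {a} else {}) \<union> (if Q (-a) then {-a} else {})" by auto
    then show ?thesis using that by (auto simp: card_insert_if)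
  qed
  from this[OF pos] show ?thesis
    unfolding admissible_lifts_def Let_def using pos by auto
qed

lemma sum_sign_lifts:
  assumes "u \<in> perms n" and "k < n"
  shows "(\<Sum>x\<in>lifts u k. sign x) = 0"
  using perms_nth[OF assms] by (simp add: sign_def)

lemma card_lifts:
  assumes "u \<in> perms n" and "k < n"
  shows "card (lifts u k) = 2"
  using perms_nth[OF assms] by (simp add: card_insert_if)

definition lift_count_B :: "nat set \<Rightarrow> nat set \<Rightarrow> nat" where
  "lift_count_B J P = (if \<forall>p\<in>P. (p - 1 \<in> J) \<noteq> (p \<in> J) then 2 ^ card P else 0)"

lemma DesB_eq_iff:
  assumes "1 \<le> n" and "J \<subseteq> {..<n}"
  shows "DesB n w = J \<longleftrightarrow> (\<forall>i\<in>{..<n}. i \<in> J \<longleftrightarrow> valB w i > valB w (i + 1))"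
proof -
  have "{0..n-1} = {..<n}" using assms(1) by auto
  then show ?thesis using assms(2) unfolding DesB_def by auto
qed

lemma DesB_fibre_eq_choice_lists:
  assumes u: "u \<in> perms n" and n: "1 \<le> n" and J: "J \<subseteq> {..<n}"
  shows "{w \<in> sperms n. forget w = u \<and> DesB n w = J} = choice_lists n (admissible_lifts n {..<n} J u)"
proof -
  have "{w \<in> sperms n. forget w = u \<and> DesB n w = J}
      = {w \<in> choice_lists n (lifts u). \<forall>i\<in>{..<n}. i \<in> J \<longleftrightarrow> valB w i > valB w (i + 1)}"
    using sperms_fibre_eq_choice_lists[OF u] DesB_eq_iff[OF n J] by blast
  also have "\<dots> = choice_lists n (admissible_lifts n {..<n} J u)"
    by (rule descent_pattern_eq_choice_lists[OF u _ n]) simp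
  finally show ?thesis .
qed

lemma Peak_eq_image_Suc:
  assumes u: "u \<in> perms n"
  shows "Peak n u = Suc ` {k. Suc k < n \<and> ascent u k \<and> \<not> ascent u (Suc k)}"
proof (intro set_eqI iffI)
  fix i assume "i \<in> Peak n u"
  then have "i = Suc (i - 1)" "Suc (i - 1) < n" "ascent u (i - 1)" "\<not> ascent u (Suc (i - 1))"
    unfolding Peak_def ascent_def by auto
  then show "i \<in> Suc ` {k. Suc k < n \<and> ascent u k \<and> \<not> ascent u (Suc k)}" by blast
next
  fix i assume "i \<in> Suc ` {k. Suc k < n \<and> ascent u k \<and> \<not> ascent u (Suc k)}"
  then obtain k where k: "i = Suc k" "Suc k < n" "ascent u k" "\<not> ascent u (Suc k)" by blast
  with valA_neq_Suc[OF u k(2)] show "i \<in> Peak n u"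
    unfolding Peak_def ascent_def by auto
qed

lemma prod_lessThan_indicators:
  fixes f :: "nat \<Rightarrow> 'a::comm_monoid_mult"
  assumes "A \<subseteq> {..<n}" and "B \<subseteq> {..<n}"
  shows "(\<Prod>k<n. (if k \<in> A then f k else 1) * (if k \<in> B then c else 1)) = prod f A * c ^ card B"
proof -
  have "(\<Prod>k<n. if k \<in> A then f k else 1) = prod f A"
    using assms(1) prod.inter_restrict[of "{..<n}" f A] by (simp add: Int_absorb1)
  moreover have "(\<Prod>k<n. if k \<in> B then c else 1) = c ^ card B"
    using assms(2) prod.inter_restrict[of "{..<n}" "\<lambda>_. c" B] by (simp add: Int_absorb1)
  ultimately show ?thesis by (simp add: prod.distrib)
qed

text \<open>Peaks of \<open>u\<close> and ends of maximal descending runs alternate, so they are equinumerous;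
  the former make the count vanish unless \<open>J\<close> toggles there, the latter leave two free signs.\<close>
lemma card_DesB_fibre:
  assumes u: "u \<in> perms n" and n: "1 \<le> n" and J: "J \<subseteq> {..<n}"
  shows "card {w \<in> sperms n. forget w = u \<and> DesB n w = J} = lift_count_B J (Peak n u)"
proof -
  define desc where "desc k \<longleftrightarrow> k < n \<and> \<not> ascent u k" for k
  define peaks where "peaks = {k. k < n \<and> \<not> desc k \<and> desc (Suc k)}"
  define run_ends where "run_ends = {k. k < n \<and> desc k \<and> \<not> desc (Suc k)}"
  define toggle where "toggle k = (if (k \<in> J) \<noteq> (Suc k \<in> J) then 1 else (0::nat))" for k
  have Peak: "Peak n u = Suc ` peaks"
    unfolding Peak_eq_image_Suc[OF u] peaks_def desc_def by auto
  have "int (card peaks) - int (card run_ends) = (if desc n then 1 else 0) - (if desc 0 then 1 else 0)"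
    unfolding peaks_def run_ends_def by (rule card_rises_minus_card_falls)
  moreover have "\<not> desc n" and "\<not> desc 0" using ascent_0[OF u n] by (auto simp: desc_def)
  moreover have "card (Peak n u) = card peaks" unfolding Peak by (simp add: card_image)
  ultimately have card_run_ends: "card run_ends = card (Peak n u)" by simp
  have "card {w \<in> sperms n. forget w = u \<and> DesB n w = J} = (\<Prod>k<n. card (admissible_lifts n {..<n} J u k))"
    unfolding DesB_fibre_eq_choice_lists[OF u n J] by (rule card_choice_lists[OF finite_admissible_lifts])
  also have "\<dots> = (\<Prod>k<n. (if k \<in> peaks then toggle k else 1) * (if k \<in> run_ends then 2 else 1))"
    by (intro prod.cong refl)
      (auto simp: card_admissible_lifts[OF u] Let_def peaks_def run_ends_def desc_def toggle_def)
  also have "\<dots> = prod toggle peaks * 2 ^ card run_ends"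
    by (rule prod_lessThan_indicators) (auto simp: peaks_def run_ends_def)
  also have "prod toggle peaks = (if \<forall>p\<in>Peak n u. (p - 1 \<in> J) \<noteq> (p \<in> J) then 1 else 0)"
    unfolding Peak using finite_subset[of peaks "{..<n}"] by (auto simp: peaks_def toggle_def prod_zero_iff)
  finally show ?thesis unfolding lift_count_B_def card_run_ends by simp
qed

definition lift_count_D :: "nat set \<Rightarrow> nat set \<Rightarrow> rat" where
  "lift_count_D J P = (if 1 \<in> P then of_nat (lift_count_B J P) / 2
     else if 0 \<in> J \<longleftrightarrow> 1 \<in> J then of_nat (lift_count_B J P) else 0)"

lemma dperms_fibre_eq:
  assumes "u \<in> perms n"
  shows "{w \<in> dperms n. forget w = u \<and> Q w} = {w \<in> choice_lists n (lifts u). even (negs w) \<and> Q w}"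
  using sperms_fibre_eq_choice_lists[OF assms] unfolding dperms_def by blast

lemma DesD_eq:
  assumes "2 \<le> n"
  shows "DesD n w = {i \<in> {1..<n}. valB w i > valB w (i + 1)} \<union> (if - valB w 1 > valB w 2 then {0} else {})"
proof -
  have "{1..n-1} = {1..<n}" using assms by auto
  then show ?thesis unfolding DesD_def using assms by simp
qed

lemma lift_descent_1'_iff:
  assumes u: "u \<in> perms n" and n: "2 \<le> n" and w: "w \<in> choice_lists n (lifts u)"
  shows "- valB w 1 > valB w 2 \<longleftrightarrow>
    (if ascent u 1 then valB w 1 > valB w (1 + 1) else valB w 0 > valB w (0 + 1))"
proof -
  have "w ! 0 \<in> lifts u 0" and "w ! 1 \<in> lifts u 1"
    using w n unfolding choice_lists_def by auto
  moreover have "1 \<le> u ! 0" and "1 \<le> u ! 1" using perms_nth[OF u] n by auto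
  moreover have "u ! 0 \<noteq> u ! 1" using perms_nth_inj[OF u, of 0 1] n by auto
  ultimately show ?thesis unfolding ascent_def valA_def valB_def by auto
qed

lemma DesD_eq_DesB_if_descent_at_1:
  assumes u: "u \<in> perms n" and n: "2 \<le> n" and w: "w \<in> choice_lists n (lifts u)"
    and desc: "\<not> ascent u 1"
  shows "DesD n w = DesB n w"
proof -
  have "{0..n-1} = insert 0 {1..<n}" using n by auto
  then have "DesB n w = {i \<in> {1..<n}. valB w i > valB w (i + 1)} \<union> (if valB w 0 > valB w 1 then {0} else {})"
    unfolding DesB_def by auto
  then show ?thesis using DesD_eq[OF n] lift_descent_1'_iff[OF u n w] desc by simp
qed

lemma DesD_eq_iff_if_ascent_at_1:
  assumes u: "u \<in> perms n" and n: "2 \<le> n" and w: "w \<in> choice_lists n (lifts u)"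
    and asc: "ascent u 1" and J: "J \<subseteq> {..<n}"
  shows "DesD n w = J \<longleftrightarrow>
    (0 \<in> J \<longleftrightarrow> 1 \<in> J) \<and> (\<forall>i\<in>{1..<n}. i \<in> J \<longleftrightarrow> valB w i > valB w (i + 1))"
proof -
  have D: "DesD n w = {i \<in> {1..<n}. valB w i > valB w (i + 1)} \<union> (if valB w 1 > valB w (1 + 1) then {0} else {})"
    using DesD_eq[OF n] lift_descent_1'_iff[OF u n w] asc by simp
  have one: "1 \<in> {1..<n}" using n by simp
  show ?thesis
  proof
    assume "DesD n w = J"
    then have J_eq: "J = {i \<in> {1..<n}. valB w i > valB w (i + 1)}
        \<union> (if valB w 1 > valB w (1 + 1) then {0} else {})"
      using D by simp
    have "0 \<in> J \<longleftrightarrow> valB w 1 > valB w (1 + 1)" unfolding J_eq by auto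
    moreover have "1 \<in> J \<longleftrightarrow> valB w 1 > valB w (1 + 1)" unfolding J_eq using one by auto
    moreover have "\<forall>i\<in>{1..<n}. i \<in> J \<longleftrightarrow> valB w i > valB w (i + 1)" unfolding J_eq by auto
    ultimately show "(0 \<in> J \<longleftrightarrow> 1 \<in> J) \<and> (\<forall>i\<in>{1..<n}. i \<in> J \<longleftrightarrow> valB w i > valB w (i + 1))"
      by blast
  next
    assume pattern: "(0 \<in> J \<longleftrightarrow> 1 \<in> J) \<and> (\<forall>i\<in>{1..<n}. i \<in> J \<longleftrightarrow> valB w i > valB w (i + 1))"
    show "DesD n w = J"
    proof (rule set_eqI)
      fix i show "i \<in> DesD n w \<longleftrightarrow> i \<in> J"
        by (cases "i = 0") (use pattern one J in \<open>auto simp: D\<close>)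
    qed
  qed
qed

lemma one_in_Peak_iff:
  assumes "u \<in> perms n" and "2 \<le> n"
  shows "1 \<in> Peak n u \<longleftrightarrow> \<not> ascent u 1"
  using assms ascent_0[of u n] unfolding Peak_eq_image_Suc[OF assms(1)] by auto

lemma exists_end_of_descent_run:
  assumes u: "u \<in> perms n" and n: "2 \<le> n" and desc: "\<not> ascent u 1"
  shows "\<exists>k<n. \<not> ascent u k \<and> \<not> (k + 1 < n \<and> \<not> ascent u (k + 1))"
proof -
  let ?D = "{k. k < n \<and> \<not> ascent u k}"
  have "finite ?D" and "1 \<in> ?D" using n desc by simp_all
  then have k: "Max ?D \<in> ?D" and max: "\<And>k. k \<in> ?D \<Longrightarrow> k \<le> Max ?D"
    using Max_in Max_ge by blast+
  have "\<not> (Max ?D + 1 < n \<and> \<not> ascent u (Max ?D + 1))"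
  proof
    assume "Max ?D + 1 < n \<and> \<not> ascent u (Max ?D + 1)"
    then have "Max ?D + 1 \<in> ?D" by simp
    from max[OF this] show False by simp
  qed
  with k show ?thesis by blast
qed

lemma card_DesD_fibre_if_descent_at_1:
  assumes u: "u \<in> perms n" and n: "2 \<le> n" and J: "J \<subseteq> {..<n}" and desc: "\<not> ascent u 1"
  shows "2 * card {w \<in> dperms n. forget w = u \<and> DesD n w = J} = lift_count_B J (Peak n u)"
proof -
  have n1: "1 \<le> n" using n by simp
  let ?A = "admissible_lifts n {..<n} J u"
  have "{w \<in> dperms n. forget w = u \<and> DesD n w = J}
      = {w \<in> choice_lists n (lifts u). even (negs w) \<and> DesB n w = J}"
    unfolding dperms_fibre_eq[OF u] using DesD_eq_DesB_if_descent_at_1[OF u n _ desc] by blast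
  also have "\<dots> = {w \<in> choice_lists n ?A. even (negs w)}"
    using DesB_fibre_eq_choice_lists[OF u n1 J] sperms_fibre_eq_choice_lists[OF u] by blast
  finally have fibre: "{w \<in> dperms n. forget w = u \<and> DesD n w = J} = {w \<in> choice_lists n ?A. even (negs w)}" .
  obtain k where k: "k < n" "\<not> ascent u k" "\<not> (k + 1 < n \<and> \<not> ascent u (k + 1))"
    using exists_end_of_descent_run[OF u n desc] by blast
  then have "?A k = lifts u k" by (intro admissible_lifts_unconstrained) auto
  then have "\<exists>k<n. (\<Sum>x\<in>?A k. sign x) = 0" using sum_sign_lifts[OF u k(1)] k(1) by auto
  from card_even_negs_choice_lists[OF finite_admissible_lifts this]
  show ?thesis
    unfolding fibre DesB_fibre_eq_choice_lists[OF u n1 J, symmetric] card_DesB_fibre[OF u n1 J] .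
qed

text \<open>When \<open>u\<close> ascends at 1, the sign of the first entry of a lift only matters for the
  descent at 0, so dropping that constraint doubles the count.\<close>
lemma card_admissible_lifts_drop_0:
  assumes u: "u \<in> perms n" and n: "2 \<le> n" and asc: "ascent u 1"
  shows "card (choice_lists n (admissible_lifts n {1..<n} J u))
    = 2 * card (choice_lists n (admissible_lifts n {..<n} J u))"
proof -
  obtain m where m: "n = Suc m" using n by (cases n) auto
  have same: "admissible_lifts n {1..<n} J u (Suc k) = admissible_lifts n {..<n} J u (Suc k)" for k
    unfolding admissible_lifts_def by auto
  have "card (admissible_lifts n {1..<n} J u 0) = 2"
    using asc card_lifts[OF u, of 0] n by (subst admissible_lifts_unconstrained) auto
  moreover have "card (admissible_lifts n {..<n} J u 0) = 1"
    using card_admissible_lifts[OF u, of 0 "{..<n}" J] n asc ascent_0[OF u] by (simp add: Let_def)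
  ultimately show ?thesis
    unfolding card_choice_lists[OF finite_admissible_lifts] m prod.lessThan_Suc_shift
    using same[unfolded m] by simp
qed

lemma card_DesD_fibre_if_ascent_at_1:
  assumes u: "u \<in> perms n" and n: "2 \<le> n" and J: "J \<subseteq> {..<n}" and asc: "ascent u 1"
  shows "card {w \<in> dperms n. forget w = u \<and> DesD n w = J}
    = (if 0 \<in> J \<longleftrightarrow> 1 \<in> J then lift_count_B J (Peak n u) else 0)"
proof (cases "0 \<in> J \<longleftrightarrow> 1 \<in> J")
  case False
  then have empty: "{w \<in> dperms n. forget w = u \<and> DesD n w = J} = {}"
    unfolding dperms_fibre_eq[OF u] using DesD_eq_iff_if_ascent_at_1[OF u n _ asc J] by blast
  show ?thesis unfolding empty using False by simp
next
  case True
  have n1: "1 \<le> n" using n by simp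
  let ?A = "admissible_lifts n {1..<n} J u"
  have "{w \<in> dperms n. forget w = u \<and> DesD n w = J}
      = {w \<in> {w \<in> choice_lists n (lifts u). \<forall>i\<in>{1..<n}. i \<in> J \<longleftrightarrow> valB w i > valB w (i + 1)}.
           even (negs w)}"
    unfolding dperms_fibre_eq[OF u] using DesD_eq_iff_if_ascent_at_1[OF u n _ asc J] True by blast
  also have "\<dots> = {w \<in> choice_lists n ?A. even (negs w)}"
    by (subst descent_pattern_eq_choice_lists[OF u _ n1]) auto
  finally have fibre: "{w \<in> dperms n. forget w = u \<and> DesD n w = J} = {w \<in> choice_lists n ?A. even (negs w)}" .
  have "?A 0 = lifts u 0" using asc by (intro admissible_lifts_unconstrained) auto
  then have "\<exists>k<n. (\<Sum>x\<in>?A k. sign x) = 0"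
    using sum_sign_lifts[OF u, of 0] n by (intro exI[of _ 0]) simp
  from card_even_negs_choice_lists[OF finite_admissible_lifts this]
  show ?thesis
    unfolding fibre card_admissible_lifts_drop_0[OF u n asc] DesB_fibre_eq_choice_lists[OF u n1 J, symmetric]
      card_DesB_fibre[OF u n1 J] using True by simp
qed

lemma card_DesD_fibre:
  assumes u: "u \<in> perms n" and n: "2 \<le> n" and J: "J \<subseteq> {..<n}"
  shows "of_nat (card {w \<in> dperms n. forget w = u \<and> DesD n w = J}) = lift_count_D J (Peak n u)"
proof (cases "ascent u 1")
  case True
  then show ?thesis
    using card_DesD_fibre_if_ascent_at_1[OF u n J] one_in_Peak_iff[OF u n] unfolding lift_count_D_def by simp
next
  case False
  then show ?thesis
    using card_DesD_fibre_if_descent_at_1[OF u n J] one_in_Peak_iff[OF u n] unfolding lift_count_D_def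
    by (simp add: field_simps)
qed

lemma card_DesD_fibre_1:
  assumes u: "u \<in> perms 1"
  shows "card {w \<in> dperms 1. forget w = u \<and> DesD 1 w = {}} = 1"
proof -
  have "{w \<in> dperms 1. forget w = u \<and> DesD 1 w = {}} = {w \<in> choice_lists 1 (lifts u). even (negs w)}"
    using dperms_fibre_eq[OF u, of "\<lambda>_. True"] by (simp add: DesD_def)
  moreover have "2 * card {w \<in> choice_lists 1 (lifts u). even (negs w)} = card (choice_lists 1 (lifts u))"
    using sum_sign_lifts[OF u] by (intro card_even_negs_choice_lists) auto
  moreover have "card (choice_lists 1 (lifts u)) = 2"
    using card_lifts[OF u] by (simp add: card_choice_lists)
  ultimately show ?thesis by simp
qed

section \<open>The peak algebra as image of the descent algebras of types B and D\<close>

lemma SigmaB_eq_class_fun: "SigmaB n = class_fun (sperms n) (DesB n)"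
  unfolding SigmaB_def YB_def
  by (subst span_indicators_eq_class_fun[symmetric]) (auto simp: DesB_def)

lemma DesD_subset_DIdx: "DesD n w \<subseteq> DIdx n"
  unfolding DesD_def DIdx_def by auto

lemma SigmaD_eq_class_fun: "SigmaD n = class_fun (dperms n) (DesD n)"
proof -
  have "DesD n ` dperms n \<subseteq> Pow (DIdx n)" using DesD_subset_DIdx by blast
  moreover have "finite (Pow (DIdx n))" by (simp add: DIdx_def)
  ultimately show ?thesis
    unfolding SigmaD_def YD_def by (simp add: span_indicators_eq_class_fun)
qed

lemma YB_in_SigmaB: "YB n J \<in> SigmaB n"
  unfolding SigmaB_eq_class_fun YB_def by (auto intro: class_funI)

lemma YD_in_SigmaD: "YD n J \<in> SigmaD n"
  unfolding SigmaD_eq_class_fun YD_def by (auto intro: class_funI)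

lemma phi_add: "phi n (\<lambda>w. f w + g w) = (\<lambda>u. phi n f u + phi n g u)"
  unfolding phi_def by (simp add: sum.distrib)

lemma phi_smult: "phi n (\<lambda>w. a * f w) = (\<lambda>u. a * phi n f u)"
  unfolding phi_def by (simp add: sum_distrib_left)

lemma phi_sum: "phi n (\<lambda>w. \<Sum>J\<in>A. c J * g J w) u = (\<Sum>J\<in>A. c J * phi n (g J) u)"
  unfolding phi_def by (subst sum.swap) (simp add: sum_distrib_left)

lemma psi_add: "psi n (\<lambda>w. f w + g w) = (\<lambda>u. psi n f u + psi n g u)"
  unfolding psi_def by (simp add: sum.distrib)

lemma psi_smult: "psi n (\<lambda>w. a * f w) = (\<lambda>u. a * psi n f u)"
  unfolding psi_def by (simp add: sum_distrib_left)

lemma psi_sum: "psi n (\<lambda>w. \<Sum>J\<in>A. c J * g J w) u = (\<Sum>J\<in>A. c J * psi n (g J) u)"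
  unfolding psi_def by (subst sum.swap) (simp add: sum_distrib_left)

lemma sum_indicator_eq_card:
  "finite A \<Longrightarrow> (\<Sum>w\<in>A. if P w then 1 else 0) = (of_nat (card {w \<in> A. P w}) :: rat)"
  by (simp add: sum.If_cases Int_def)

lemma phi_YB:
  assumes n: "1 \<le> n" and J: "J \<subseteq> {..<n}"
  shows "phi n (YB n J) u = (if u \<in> perms n then of_nat (lift_count_B J (Peak n u)) else 0)"
proof -
  have "phi n (YB n J) u = (\<Sum>w\<in>{w \<in> sperms n. forget w = u}. if DesB n w = J then 1 else 0)"
    unfolding phi_def YB_def by (rule sum.cong) auto
  also have "\<dots> = of_nat (card {w \<in> sperms n. forget w = u \<and> DesB n w = J})"
    by (simp add: sum_indicator_eq_card[OF finite_sperms_fibre] conj_assoc)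
  also have "\<dots> = (if u \<in> perms n then of_nat (lift_count_B J (Peak n u)) else 0)"
  proof (cases "u \<in> perms n")
    case False
    then have "{w \<in> sperms n. forget w = u \<and> DesB n w = J} = {}" using forget_in_perms by blast
    with False show ?thesis by (simp only: card.empty) simp
  qed (simp add: card_DesB_fibre[OF _ n J])
  finally show ?thesis .
qed

lemma finite_dperms_fibre: "finite {w \<in> dperms n. forget w = u}"
  by (rule finite_subset[OF _ finite_sperms_fibre[of n u]]) (auto simp: dperms_def)

lemma psi_YD:
  assumes n: "1 \<le> n" and J: "J \<subseteq> DIdx n"
  shows "psi n (YD n J) u = (if u \<in> perms n then lift_count_D J (Peak n u) else 0)"
proof -
  have "psi n (YD n J) u = (\<Sum>w\<in>{w \<in> dperms n. forget w = u}. if DesD n w = J then 1 else 0)"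
    unfolding psi_def YD_def by (rule sum.cong) auto
  also have "\<dots> = of_nat (card {w \<in> dperms n. forget w = u \<and> DesD n w = J})"
    by (simp add: sum_indicator_eq_card[OF finite_dperms_fibre] conj_assoc)
  finally have psi_eq: "psi n (YD n J) u = of_nat (card {w \<in> dperms n. forget w = u \<and> DesD n w = J})" .
  show ?thesis
  proof (cases "u \<in> perms n")
    case u: True
    show ?thesis
    proof (cases "2 \<le> n")
      case True
      then have "J \<subseteq> {..<n}" using J unfolding DIdx_def by auto
      with psi_eq card_DesD_fibre[OF u True] u show ?thesis by simp
    next
      case False
      then have "n = 1" and "J = {}" and "Peak n u = {}"
        using n J unfolding DIdx_def Peak_def by auto
      with psi_eq card_DesD_fibre_1 u show ?thesis
        by (simp add: lift_count_D_def lift_count_B_def)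
    qed
  next
    case False
    then have "{w \<in> dperms n. forget w = u \<and> DesD n w = J} = {}"
      using forget_in_perms unfolding dperms_def by blast
    with psi_eq False show ?thesis by simp
  qed
qed

lemma peak_function_in_PeakAlg:
  assumes "\<And>u. g u = (if u \<in> perms n then h (Peak n u) else 0)"
  shows "g \<in> PeakAlg n"
  unfolding PeakAlg_eq_class_fun using assms by (intro class_funI) simp_all

lemma phi_SigmaB_subset_PeakAlg:
  assumes n: "1 \<le> n"
  shows "phi n ` SigmaB n \<subseteq> PeakAlg n"
proof
  fix g assume "g \<in> phi n ` SigmaB n"
  then obtain c where g: "g = phi n (\<lambda>w. \<Sum>J\<in>Pow {0..n-1}. c J * YB n J w)"
    unfolding SigmaB_def by blast
  have "J \<subseteq> {..<n}" if "J \<in> Pow {0..n-1}" for J using that n by auto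
  then have "g u = (if u \<in> perms n then \<Sum>J\<in>Pow {0..n-1}. c J * of_nat (lift_count_B J (Peak n u)) else 0)"
    for u unfolding g phi_sum by (auto simp: phi_YB[OF n] intro: sum.neutral)
  then show "g \<in> PeakAlg n" by (rule peak_function_in_PeakAlg)
qed

lemma psi_SigmaD_subset_PeakAlg:
  assumes n: "1 \<le> n"
  shows "psi n ` SigmaD n \<subseteq> PeakAlg n"
proof
  fix g assume "g \<in> psi n ` SigmaD n"
  then obtain c where g: "g = psi n (\<lambda>w. \<Sum>J\<in>Pow (DIdx n). c J * YD n J w)"
    unfolding SigmaD_def by blast
  have "g u = (if u \<in> perms n then \<Sum>J\<in>Pow (DIdx n). c J * lift_count_D J (Peak n u) else 0)"
    for u unfolding g psi_sum by (auto simp: psi_YD[OF n] intro: sum.neutral)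
  then show "g \<in> PeakAlg n" by (rule peak_function_in_PeakAlg)
qed

lemma sum_Pow_PF:
  assumes "finite F" and "u \<in> perms n"
  shows "(\<Sum>G\<in>Pow F. a G * PF n G u) = (if Peak n u \<subseteq> F then a (Peak n u) else 0)"
proof -
  have "(\<Sum>G\<in>Pow F. a G * PF n G u) = (\<Sum>G\<in>Pow F. if G = Peak n u then a G else 0)"
    unfolding PF_def using assms by (intro sum.cong) auto
  then show ?thesis using assms by (simp add: sum.delta')
qed

lemma PeakAlg_subset_if_triangular:
  assumes V: "lin_closed V"
    and lead: "\<And>F. F \<in> Fn n \<Longrightarrow> \<exists>a. a F \<noteq> 0 \<and> (\<lambda>u. \<Sum>G\<in>Pow F. a G * PF n G u) \<in> V"
  shows "PeakAlg n \<subseteq> V"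
proof
  have "PF n F \<in> V" if "F \<in> Fn n" for F
    using V Fn_downward_closed finite_in_Fn lead that by (rule lin_closed_triangular)
  then show "f \<in> V" if "f \<in> PeakAlg n" for f
    using that unfolding PeakAlg_def by (auto intro: lin_closed_sum[OF V finite_Fn])
qed

text \<open>The descent set that switches between "out" and "in" exactly at the elements of \<open>F\<close>.\<close>
definition toggle_set :: "nat \<Rightarrow> nat set \<Rightarrow> nat set" where
  "toggle_set n F = {i \<in> {1..<n}. odd (card {f \<in> F. f \<le> i})}"

lemma toggle_set_toggles:
  assumes F: "F \<subseteq> {1..n-1}" and p: "p \<in> {1..n-1}"
  shows "(p - 1 \<in> toggle_set n F) \<noteq> (p \<in> toggle_set n F) \<longleftrightarrow> p \<in> F"
proof -
  have split: "{f \<in> F. f \<le> p} = {f \<in> F. f \<le> p - 1} \<union> (if p \<in> F then {p} else {})"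
  proof (rule set_eqI)
    fix x
    have "x \<le> p \<longleftrightarrow> x \<le> p - 1 \<or> x = p" using p by auto
    then show "x \<in> {f \<in> F. f \<le> p} \<longleftrightarrow> x \<in> {f \<in> F. f \<le> p - 1} \<union> (if p \<in> F then {p} else {})"
      by auto
  qed
  have "finite F" using F finite_subset by blast
  then have card_p: "card {f \<in> F. f \<le> p} = card {f \<in> F. f \<le> p - 1} + (if p \<in> F then 1 else 0)"
    unfolding split using p by (auto simp: card_insert_if)
  have prev: "p - 1 \<in> toggle_set n F \<longleftrightarrow> odd (card {f \<in> F. f \<le> p - 1})"
  proof (cases "p = 1")
    case True
    then have empty: "{f \<in> F. f \<le> p - 1} = {}" using F by auto
    show ?thesis unfolding empty using True by (simp add: toggle_set_def)
  qed (use p in \<open>auto simp: toggle_set_def\<close>)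
  have cur: "p \<in> toggle_set n F \<longleftrightarrow> odd (card {f \<in> F. f \<le> p})"
    using p unfolding toggle_set_def by auto
  show ?thesis unfolding prev cur card_p by auto
qed

lemma toggle_set_subset: "toggle_set n F \<subseteq> {..<n}" and toggle_set_subset_DIdx: "toggle_set n F \<subseteq> DIdx n"
  unfolding toggle_set_def DIdx_def by auto

lemma zero_notin_toggle_set: "0 \<notin> toggle_set n F"
  unfolding toggle_set_def by simp

lemma one_in_toggle_set_iff:
  assumes "F \<in> Fn n"
  shows "1 \<in> toggle_set n F \<longleftrightarrow> 1 \<in> F"
proof -
  have "{f \<in> F. f \<le> 1} = (if 1 \<in> F then {1} else {})" using assms unfolding Fn_def by auto
  then show ?thesis using assms unfolding toggle_set_def Fn_def by auto
qed

lemma lift_count_B_toggle_set: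
  assumes F: "F \<in> Fn n"
  shows "lift_count_B (toggle_set n F) (Peak n u) = (if Peak n u \<subseteq> F then 2 ^ card (Peak n u) else 0)"
proof -
  have "F \<subseteq> {1..n-1}" using F unfolding Fn_def by auto
  then have "(\<forall>p\<in>Peak n u. (p - 1 \<in> toggle_set n F) \<noteq> (p \<in> toggle_set n F)) \<longleftrightarrow> Peak n u \<subseteq> F"
    using toggle_set_toggles Peak_subset by blast
  then show ?thesis unfolding lift_count_B_def by simp
qed

lemma PeakAlg_subset_phi_SigmaB:
  assumes n: "1 \<le> n"
  shows "PeakAlg n \<subseteq> phi n ` SigmaB n"
proof (rule PeakAlg_subset_if_triangular)
  show "lin_closed (phi n ` SigmaB n)"
    unfolding SigmaB_eq_class_fun by (rule lin_closed_image[OF lin_closed_class_fun phi_add phi_smult])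
  fix F assume F: "F \<in> Fn n"
  have "phi n (YB n (toggle_set n F)) u = (\<Sum>G\<in>Pow F. 2 ^ card G * PF n G u)" for u
  proof (cases "u \<in> perms n")
    case True
    then show ?thesis
      by (simp add: phi_YB[OF n toggle_set_subset] sum_Pow_PF[OF finite_in_Fn[OF F]]
          lift_count_B_toggle_set[OF F])
  qed (simp add: phi_YB[OF n toggle_set_subset] PF_def)
  then have "(\<lambda>u. \<Sum>G\<in>Pow F. 2 ^ card G * PF n G u) \<in> phi n ` SigmaB n"
    using YB_in_SigmaB by (metis (no_types, lifting) ext image_eqI)
  then show "\<exists>a. a F \<noteq> 0 \<and> (\<lambda>u. \<Sum>G\<in>Pow F. a G * PF n G u) \<in> phi n ` SigmaB n"
    by (intro exI[of _ "\<lambda>G. 2 ^ card G"]) simp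
qed

lemma PeakAlg_subset_psi_SigmaD:
  assumes n: "1 \<le> n"
  shows "PeakAlg n \<subseteq> psi n ` SigmaD n"
proof (rule PeakAlg_subset_if_triangular)
  show "lin_closed (psi n ` SigmaD n)"
    unfolding SigmaD_eq_class_fun by (rule lin_closed_image[OF lin_closed_class_fun psi_add psi_smult])
  fix F assume F: "F \<in> Fn n"
  define a where "a G = (if 1 \<in> F then if 1 \<in> G then 2 ^ card G / 2 else 0 else (2::rat) ^ card G)"
    for G :: "nat set"
  have lead_coeff: "lift_count_D (toggle_set n F) (Peak n u) = (if Peak n u \<subseteq> F then a (Peak n u) else 0)"
    for u
    unfolding lift_count_D_def lift_count_B_toggle_set[OF F] a_def
    using zero_notin_toggle_set one_in_toggle_set_iff[OF F] by auto
  then have "psi n (YD n (toggle_set n F)) u = (\<Sum>G\<in>Pow F. a G * PF n G u)" for u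
  proof (cases "u \<in> perms n")
    case True
    then show ?thesis
      by (simp add: psi_YD[OF n toggle_set_subset_DIdx] sum_Pow_PF[OF finite_in_Fn[OF F]] lead_coeff)
  qed (simp add: psi_YD[OF n toggle_set_subset_DIdx] PF_def)
  then have "(\<lambda>u. \<Sum>G\<in>Pow F. a G * PF n G u) \<in> psi n ` SigmaD n"
    using YD_in_SigmaD by (metis (no_types, lifting) ext image_eqI)
  moreover have "a F \<noteq> 0" unfolding a_def by simp
  ultimately show "\<exists>a. a F \<noteq> 0 \<and> (\<lambda>u. \<Sum>G\<in>Pow F. a G * PF n G u) \<in> psi n ` SigmaD n"
    by blast
qed

section \<open>Signed permutations acting on the integers\<close>

definition Omega :: "nat \<Rightarrow> int set" where
  "Omega n = {- int n..int n}"

text \<open>The signed permutation \<open>w\<close> as an odd map of the integers, fixing everything outside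
  \<open>Omega (length w)\<close>.\<close>
definition sapply :: "int list \<Rightarrow> int \<Rightarrow> int" where
  "sapply w x = (if x = 0 \<or> nat \<bar>x\<bar> > length w then x else sgn x * w ! (nat \<bar>x\<bar> - 1))"

definition scompose :: "int list \<Rightarrow> int list \<Rightarrow> int list" where
  "scompose w v = map (sapply w) v"

lemma finite_Omega: "finite (Omega n)" and card_Omega: "card (Omega n) = 2 * n + 1"
  unfolding Omega_def by simp_all

lemma uminus_in_Omega_iff [simp]: "- x \<in> Omega n \<longleftrightarrow> x \<in> Omega n"
  unfolding Omega_def by auto

lemma sperms_length: "w \<in> sperms n \<Longrightarrow> length w = n"
  unfolding sperms_def by simp

lemma sperms_nth:
  assumes w: "w \<in> sperms n" and k: "k < n"
  shows "w ! k \<noteq> 0" and "\<bar>w ! k\<bar> \<le> int n"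
proof -
  have "forget w ! k = nat \<bar>w ! k\<bar>" using k sperms_length[OF w] unfolding forget_def by simp
  then show "w ! k \<noteq> 0" "\<bar>w ! k\<bar> \<le> int n"
    using perms_nth[OF forget_in_perms[OF w] k] by auto
qed

lemma sperms_abs_nth_inj:
  assumes w: "w \<in> sperms n" and "k < n" and "j < n" and "\<bar>w ! k\<bar> = \<bar>w ! j\<bar>"
  shows "k = j"
proof -
  have "forget w ! k = forget w ! j"
    using assms sperms_length[OF w] unfolding forget_def by simp
  then show ?thesis using perms_nth_inj[OF forget_in_perms[OF w]] assms by blast
qed

lemma finite_sperms: "finite (sperms n)"
proof -
  have "sperms n \<subseteq> {xs. set xs \<subseteq> {- int n..int n} \<and> length xs = n}"
    using sperms_nth(2) sperms_length by (fastforce simp: in_set_conv_nth)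
  then show ?thesis by (rule finite_subset) (simp add: finite_lists_length_eq)
qed

lemma sapply_uminus: "sapply w (- x) = - sapply w x"
  unfolding sapply_def by (auto simp: sgn_if)

lemma sapply_0 [simp]: "sapply w 0 = 0"
  unfolding sapply_def by simp

lemma sapply_of_nat:
  assumes "1 \<le> k" and "k \<le> length w"
  shows "sapply w (int k) = w ! (k - 1)"
  using assms unfolding sapply_def by simp

lemma abs_sapply:
  assumes w: "w \<in> sperms n" and x: "x \<in> Omega n" and x0: "x \<noteq> 0"
  shows "\<bar>sapply w x\<bar> = \<bar>w ! (nat \<bar>x\<bar> - 1)\<bar>"
proof -
  have "\<not> nat \<bar>x\<bar> > length w" using x sperms_length[OF w] unfolding Omega_def by auto
  then show ?thesis unfolding sapply_def using x0 by (simp add: abs_mult abs_sgn_eq)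
qed

lemma sapply_in_Omega:
  assumes w: "w \<in> sperms n" and x: "x \<in> Omega n"
  shows "sapply w x \<in> Omega n"
proof (cases "x = 0")
  case False
  then have "nat \<bar>x\<bar> - 1 < n" using x unfolding Omega_def by auto
  then have "\<bar>sapply w x\<bar> \<le> int n"
    using abs_sapply[OF w x False] sperms_nth(2)[OF w] by simp
  then show ?thesis unfolding Omega_def by (auto simp: abs_le_iff)
qed (simp add: Omega_def)

lemma sapply_eq_0_iff:
  assumes w: "w \<in> sperms n" and x: "x \<in> Omega n"
  shows "sapply w x = 0 \<longleftrightarrow> x = 0"
proof (cases "x = 0")
  case False
  then have "nat \<bar>x\<bar> - 1 < n" using x unfolding Omega_def by auto
  then show ?thesis using abs_sapply[OF w x False] sperms_nth(1)[OF w] False by auto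
qed simp

lemma inj_on_sapply:
  assumes w: "w \<in> sperms n"
  shows "inj_on (sapply w) (Omega n)"
proof (rule inj_onI)
  fix x y assume x: "x \<in> Omega n" and y: "y \<in> Omega n" and eq: "sapply w x = sapply w y"
  show "x = y"
  proof (cases "x = 0 \<or> y = 0")
    case True
    then show ?thesis using eq sapply_eq_0_iff[OF w x] sapply_eq_0_iff[OF w y] by auto
  next
    case False
    then have "nat \<bar>x\<bar> - 1 < n" "nat \<bar>y\<bar> - 1 < n" using x y unfolding Omega_def by auto
    moreover have "\<bar>w ! (nat \<bar>x\<bar> - 1)\<bar> = \<bar>w ! (nat \<bar>y\<bar> - 1)\<bar>"
      using abs_sapply[OF w x] abs_sapply[OF w y] eq False by metis
    ultimately have "\<bar>x\<bar> = \<bar>y\<bar>" using sperms_abs_nth_inj[OF w] False by fastforce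
    moreover have "x \<noteq> - y"
    proof
      assume "x = - y"
      then have "sapply w x = 0" using eq sapply_uminus[of w y] by simp
      then show False using sapply_eq_0_iff[OF w x] False by simp
    qed
    ultimately show ?thesis by (auto simp: abs_if split: if_splits)
  qed
qed

lemma sapply_image_Omega:
  assumes w: "w \<in> sperms n"
  shows "sapply w ` Omega n = Omega n"
  using sapply_in_Omega[OF w] by (intro endo_inj_surj finite_Omega inj_on_sapply[OF w]) blast

lemma sapply_surj_Omega:
  assumes "w \<in> sperms n" and "y \<in> Omega n"
  obtains x where "x \<in> Omega n" and "sapply w x = y"
  using sapply_image_Omega[OF assms(1)] assms(2) by (metis imageE)

lemma valB_eq_sapply:
  assumes w: "w \<in> sperms n" and i: "i \<le> n"
  shows "valB w i = sapply w (int i)"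
  using sapply_of_nat[of i w] sperms_length[OF w] i by (cases "i = 0") (auto simp: valB_def)

lemma forget_scompose:
  assumes w: "w \<in> sperms n" and v: "v \<in> sperms n"
  shows "forget (scompose w v) = compose (forget w) (forget v)"
proof -
  have "nat \<bar>sapply w x\<bar> = forget w ! (nat \<bar>x\<bar> - 1)" if xv: "x \<in> set v" for x
  proof -
    obtain k where k: "k < length v" "v ! k = x"
      using xv unfolding in_set_conv_nth by blast
    then have k: "k < n" "v ! k = x" using sperms_length[OF v] by auto
    then have "x \<noteq> 0" and "x \<in> Omega n" and "nat \<bar>x\<bar> - 1 < n"
      using sperms_nth[OF v k(1)] unfolding Omega_def by auto
    then show ?thesis
      using abs_sapply[OF w] sperms_length[OF w] unfolding forget_def by simp
  qed
  then show ?thesis unfolding scompose_def compose_def forget_def by simp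
qed

lemma compose_in_perms:
  assumes u: "u \<in> perms n" and v: "v \<in> perms n"
  shows "compose u v \<in> perms n"
proof -
  have "set (compose u v) = (\<lambda>j. u ! (j - 1)) ` {1..n}"
    unfolding compose_def using permsD(2)[OF v] by simp
  also have "\<dots> = set u"
  proof
    show "(\<lambda>j. u ! (j - 1)) ` {1..n} \<subseteq> set u" using permsD(1)[OF u] by auto
    show "set u \<subseteq> (\<lambda>j. u ! (j - 1)) ` {1..n}"
    proof
      fix x assume "x \<in> set u"
      then obtain k where "k < length u" "u ! k = x" unfolding in_set_conv_nth by blast
      then show "x \<in> (\<lambda>j. u ! (j - 1)) ` {1..n}"
        using permsD(1)[OF u] by (intro image_eqI[of _ _ "k + 1"]) auto
    qed
  qed
  finally show ?thesis using permsD[OF u] permsD[OF v] unfolding perms_def compose_def by simp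
qed

lemma scompose_in_sperms:
  assumes w: "w \<in> sperms n" and v: "v \<in> sperms n"
  shows "scompose w v \<in> sperms n"
proof -
  have "forget (scompose w v) \<in> perms n"
    using forget_scompose[OF w v] compose_in_perms[OF forget_in_perms[OF w] forget_in_perms[OF v]] by simp
  then have "length (forget (scompose w v)) = n" "set (forget (scompose w v)) = {1..n}"
    using permsD by auto
  then show ?thesis unfolding sperms_def forget_def by simp
qed

lemma sapply_scompose:
  assumes w: "w \<in> sperms n" and v: "v \<in> sperms n"
  shows "sapply (scompose w v) x = sapply w (sapply v x)"
proof (cases "x = 0 \<or> nat \<bar>x\<bar> > n")
  case True
  have "length (scompose w v) = n" using sperms_length[OF v] unfolding scompose_def by simp
  then show ?thesis using True sperms_length[OF v] sperms_length[OF w] unfolding sapply_def by auto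
next
  case False
  have len: "length w = n" "length v = n" "length (scompose w v) = n"
    using sperms_length[OF w] sperms_length[OF v] unfolding scompose_def by auto
  have "nat \<bar>x\<bar> - 1 < n" using False by auto
  then have "sapply (scompose w v) x = sgn x * sapply w (v ! (nat \<bar>x\<bar> - 1))"
    unfolding sapply_def[of "scompose w v" x] using False len by (simp add: scompose_def)
  moreover have "sapply v x = sgn x * v ! (nat \<bar>x\<bar> - 1)"
    unfolding sapply_def[of v x] using False len by simp
  moreover have "sapply w (sgn x * y) = sgn x * sapply w y" for y
    using False by (cases "x > 0") (auto simp: sapply_uminus)
  ultimately show ?thesis by simp
qed

section \<open>Faces of the Coxeter complex of type B\<close>

text \<open>A face is modelled as a total preorder on \<open>Omega n\<close> that is reversed by \<open>x \<mapsto> -x\<close>;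
  its classes form the symmetric ordered set partition of the usual description, and the
  chambers are the antisymmetric faces.\<close>
definition is_face :: "nat \<Rightarrow> (int \<times> int) set \<Rightarrow> bool" where
  "is_face n R \<longleftrightarrow> R \<subseteq> Omega n \<times> Omega n \<and> (\<forall>x\<in>Omega n. (x, x) \<in> R)
     \<and> (\<forall>x y z. (x, y) \<in> R \<longrightarrow> (y, z) \<in> R \<longrightarrow> (x, z) \<in> R)
     \<and> (\<forall>x\<in>Omega n. \<forall>y\<in>Omega n. (x, y) \<in> R \<or> (y, x) \<in> R)
     \<and> (\<forall>x y. (x, y) \<in> R \<longrightarrow> (- y, - x) \<in> R)"

definition tits_prod :: "(int \<times> int) set \<Rightarrow> (int \<times> int) set \<Rightarrow> (int \<times> int) set" where
  "tits_prod R S = {(x, y). (x, y) \<in> R \<and> ((y, x) \<in> R \<longrightarrow> (x, y) \<in> S)}"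

definition face_act :: "int list \<Rightarrow> (int \<times> int) set \<Rightarrow> (int \<times> int) set" where
  "face_act w R = (\<lambda>(x, y). (sapply w x, sapply w y)) ` R"

definition face_pullback :: "nat \<Rightarrow> int list \<Rightarrow> (int \<times> int) set \<Rightarrow> (int \<times> int) set" where
  "face_pullback n w R = {(p, q). p \<in> Omega n \<and> q \<in> Omega n \<and> (sapply w p, sapply w q) \<in> R}"

definition fund_chamber :: "nat \<Rightarrow> (int \<times> int) set" where
  "fund_chamber n = {(x, y). x \<in> Omega n \<and> y \<in> Omega n \<and> x \<le> y}"

definition chamber :: "nat \<Rightarrow> int list \<Rightarrow> (int \<times> int) set" where
  "chamber n w = face_act w (fund_chamber n)"

lemma is_faceI:
  assumes "R \<subseteq> Omega n \<times> Omega n" and "\<And>x. x \<in> Omega n \<Longrightarrow> (x, x) \<in> R"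
    and "\<And>x y z. (x, y) \<in> R \<Longrightarrow> (y, z) \<in> R \<Longrightarrow> (x, z) \<in> R"
    and "\<And>x y. x \<in> Omega n \<Longrightarrow> y \<in> Omega n \<Longrightarrow> (x, y) \<in> R \<or> (y, x) \<in> R"
    and "\<And>x y. (x, y) \<in> R \<Longrightarrow> (- y, - x) \<in> R"
  shows "is_face n R"
  using assms unfolding is_face_def by blast

lemma is_faceD:
  assumes "is_face n R"
  shows is_face_subset: "R \<subseteq> Omega n \<times> Omega n"
    and is_face_refl: "x \<in> Omega n \<Longrightarrow> (x, x) \<in> R"
    and is_face_trans: "(x, y) \<in> R \<Longrightarrow> (y, z) \<in> R \<Longrightarrow> (x, z) \<in> R"
    and is_face_total: "x \<in> Omega n \<Longrightarrow> y \<in> Omega n \<Longrightarrow> (x, y) \<in> R \<or> (y, x) \<in> R"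
    and is_face_uminus: "(x, y) \<in> R \<Longrightarrow> (- y, - x) \<in> R"
  using assms unfolding is_face_def by blast+

lemma is_face_uminus_iff: "is_face n R \<Longrightarrow> (- y, - x) \<in> R \<longleftrightarrow> (x, y) \<in> R"
  using is_face_uminus[of n R x y] is_face_uminus[of n R "- y" "- x"] by auto

lemma tits_prod_subset: "tits_prod R S \<subseteq> R"
  unfolding tits_prod_def by auto

lemma tits_prod_assoc: "tits_prod (tits_prod R S) T = tits_prod R (tits_prod S T)"
  unfolding tits_prod_def by auto

lemma is_face_tits_prod:
  assumes R: "is_face n R" and S: "is_face n S"
  shows "is_face n (tits_prod R S)"
proof (rule is_faceI)
  show "tits_prod R S \<subseteq> Omega n \<times> Omega n"
    using is_face_subset[OF R] tits_prod_subset by blast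
  show "(x, x) \<in> tits_prod R S" if "x \<in> Omega n" for x
    using that is_face_refl[OF R] is_face_refl[OF S] unfolding tits_prod_def by auto
  show "(x, y) \<in> tits_prod R S \<or> (y, x) \<in> tits_prod R S" if "x \<in> Omega n" "y \<in> Omega n" for x y
    using that is_face_total[OF R] is_face_total[OF S] unfolding tits_prod_def by blast
next
  fix x y z assume xy: "(x, y) \<in> tits_prod R S" and yz: "(y, z) \<in> tits_prod R S"
  then have R_xy: "(x, y) \<in> R" and R_yz: "(y, z) \<in> R" unfolding tits_prod_def by auto
  have "(x, z) \<in> S" if zx: "(z, x) \<in> R"
  proof -
    have "(x, y) \<in> S" using xy is_face_trans[OF R R_yz zx] unfolding tits_prod_def by auto
    moreover have "(y, z) \<in> S" using yz is_face_trans[OF R zx R_xy] unfolding tits_prod_def by auto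
    ultimately show ?thesis by (rule is_face_trans[OF S])
  qed
  then show "(x, z) \<in> tits_prod R S"
    using is_face_trans[OF R R_xy R_yz] unfolding tits_prod_def by auto
next
  fix x y assume xy: "(x, y) \<in> tits_prod R S"
  then have "(- y, - x) \<in> R" and "(y, x) \<in> R \<longrightarrow> (x, y) \<in> S"
    using is_face_uminus[OF R] unfolding tits_prod_def by auto
  then show "(- y, - x) \<in> tits_prod R S"
    using is_face_uminus_iff[OF R] is_face_uminus[OF S] unfolding tits_prod_def by auto
qed

lemma is_face_fund_chamber: "is_face n (fund_chamber n)"
  unfolding is_face_def fund_chamber_def Omega_def by auto

lemma face_act_iff: "(x, y) \<in> face_act w R \<longleftrightarrow> (\<exists>p q. (p, q) \<in> R \<and> x = sapply w p \<and> y = sapply w q)"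
  unfolding face_act_def by auto

lemma sapply_in_face_act_iff:
  assumes w: "w \<in> sperms n" and R: "R \<subseteq> Omega n \<times> Omega n" and p: "p \<in> Omega n" and q: "q \<in> Omega n"
  shows "(sapply w p, sapply w q) \<in> face_act w R \<longleftrightarrow> (p, q) \<in> R"
proof
  assume "(sapply w p, sapply w q) \<in> face_act w R"
  then obtain p' q' where pq: "(p', q') \<in> R" "sapply w p = sapply w p'" "sapply w q = sapply w q'"
    unfolding face_act_iff by blast
  then have "p = p'" and "q = q'"
    using R p q inj_on_sapply[OF w] unfolding inj_on_def by blast+
  then show "(p, q) \<in> R" using pq by simp
qed (auto simp: face_act_iff)

lemma face_act_subset:
  assumes w: "w \<in> sperms n" and R: "R \<subseteq> Omega n \<times> Omega n"
  shows "face_act w R \<subseteq> Omega n \<times> Omega n"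
  using R sapply_in_Omega[OF w] unfolding face_act_def by auto

lemma face_pullback_subset: "face_pullback n w R \<subseteq> Omega n \<times> Omega n"
  unfolding face_pullback_def by auto

lemma face_pullback_act:
  assumes w: "w \<in> sperms n" and R: "R \<subseteq> Omega n \<times> Omega n"
  shows "face_pullback n w (face_act w R) = R"
  unfolding face_pullback_def using sapply_in_face_act_iff[OF w R] R by auto

lemma face_act_pullback:
  assumes w: "w \<in> sperms n" and R: "R \<subseteq> Omega n \<times> Omega n"
  shows "face_act w (face_pullback n w R) = R"
proof (intro set_eqI iffI)
  fix z assume "z \<in> face_act w (face_pullback n w R)"
  then show "z \<in> R" unfolding face_act_def face_pullback_def by auto
next
  fix z assume zR: "z \<in> R"
  obtain x y where z: "z = (x, y)" by (cases z)
  then have "x \<in> Omega n" and "y \<in> Omega n" using R zR by auto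
  then obtain p q where "p \<in> Omega n" "q \<in> Omega n" "sapply w p = x" "sapply w q = y"
    using sapply_surj_Omega[OF w] by metis
  moreover from this zR z have "(p, q) \<in> face_pullback n w R"
    unfolding face_pullback_def by auto
  ultimately show "z \<in> face_act w (face_pullback n w R)"
    unfolding z face_act_iff by blast
qed

lemma face_act_inj:
  assumes w: "w \<in> sperms n" and "R \<subseteq> Omega n \<times> Omega n" and "S \<subseteq> Omega n \<times> Omega n"
    and "face_act w R = face_act w S"
  shows "R = S"
  using assms face_pullback_act[OF w] by metis

lemma face_pullback_tits_prod: "face_pullback n w (tits_prod R S) = tits_prod (face_pullback n w R) (face_pullback n w S)"
  unfolding face_pullback_def tits_prod_def by auto

lemma face_act_tits_prod:
  assumes w: "w \<in> sperms n" and R: "R \<subseteq> Omega n \<times> Omega n" and S: "S \<subseteq> Omega n \<times> Omega n"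
  shows "face_act w (tits_prod R S) = tits_prod (face_act w R) (face_act w S)"
proof -
  have "tits_prod (face_act w R) (face_act w S) \<subseteq> Omega n \<times> Omega n"
    using face_act_subset[OF w R] tits_prod_subset by blast
  moreover have "face_pullback n w (tits_prod (face_act w R) (face_act w S)) = tits_prod R S"
    unfolding face_pullback_tits_prod face_pullback_act[OF w R] face_pullback_act[OF w S] ..
  ultimately show ?thesis using face_act_pullback[OF w] by metis
qed

lemma face_act_scompose:
  assumes w: "w \<in> sperms n" and v: "v \<in> sperms n"
  shows "face_act w (face_act v R) = face_act (scompose w v) R"
  unfolding face_act_def image_image using sapply_scompose[OF w v] by (simp add: case_prod_beta)

lemma is_face_pullback:
  assumes w: "w \<in> sperms n" and R: "is_face n R"
  shows "is_face n (face_pullback n w R)"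
proof (rule is_faceI)
  show "(x, x) \<in> face_pullback n w R" if "x \<in> Omega n" for x
    using that is_face_refl[OF R] sapply_in_Omega[OF w] unfolding face_pullback_def by auto
  show "(x, y) \<in> face_pullback n w R \<or> (y, x) \<in> face_pullback n w R"
    if "x \<in> Omega n" "y \<in> Omega n" for x y
    using that is_face_total[OF R] sapply_in_Omega[OF w] unfolding face_pullback_def by auto
  show "(- y, - x) \<in> face_pullback n w R" if "(x, y) \<in> face_pullback n w R" for x y
    using that is_face_uminus[OF R] unfolding face_pullback_def by (auto simp: sapply_uminus)
qed (auto simp: face_pullback_def intro: is_face_trans[OF R])

lemma is_face_image:
  assumes bij: "bij_betw f (Omega n) (Omega n)" and odd: "\<And>x. f (- x) = - f x"
    and R: "is_face n R"
  shows "is_face n ((\<lambda>(x, y). (f x, f y)) ` R)" (is "is_face n ?R")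
proof (rule is_faceI)
  have inj: "inj_on f (Omega n)" and surj: "f ` Omega n = Omega n"
    using bij by (auto simp: bij_betw_def)
  have mem: "(x, y) \<in> ?R \<longleftrightarrow> (\<exists>p\<in>Omega n. \<exists>q\<in>Omega n. x = f p \<and> y = f q \<and> (p, q) \<in> R)" for x y
    using is_face_subset[OF R] by auto
  show "?R \<subseteq> Omega n \<times> Omega n" using is_face_subset[OF R] surj by auto
  show "(x, x) \<in> ?R" if x: "x \<in> Omega n" for x
  proof -
    obtain p where "p \<in> Omega n" "x = f p" using x surj by blast
    then show ?thesis unfolding mem using is_face_refl[OF R] by blast
  qed
  show "(x, y) \<in> ?R \<or> (y, x) \<in> ?R" if xy: "x \<in> Omega n" "y \<in> Omega n" for x y
  proof -
    obtain p q where "p \<in> Omega n" "x = f p" "q \<in> Omega n" "y = f q" using xy surj by blast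
    then show ?thesis unfolding mem using is_face_total[OF R] by blast
  qed
  show "(x, z) \<in> ?R" if xyz: "(x, y) \<in> ?R" "(y, z) \<in> ?R" for x y z
  proof -
    obtain p q q' r where pq: "p \<in> Omega n" "q \<in> Omega n" "x = f p" "y = f q" "(p, q) \<in> R"
      and qr: "q' \<in> Omega n" "r \<in> Omega n" "y = f q'" "z = f r" "(q', r) \<in> R"
      using xyz unfolding mem by blast
    then have "q = q'" using inj unfolding inj_on_def by metis
    with pq qr show ?thesis unfolding mem using is_face_trans[OF R] by blast
  qed
  show "(- y, - x) \<in> ?R" if xy: "(x, y) \<in> ?R" for x y
  proof -
    obtain p q where "p \<in> Omega n" "q \<in> Omega n" "x = f p" "y = f q" "(p, q) \<in> R"
      using xy unfolding mem by blast
    moreover have "- y = f (- q)" and "- x = f (- p)" using calculation odd by auto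
    ultimately show ?thesis unfolding mem using is_face_uminus[OF R] uminus_in_Omega_iff by blast
  qed
qed

lemma is_face_act:
  assumes w: "w \<in> sperms n" and R: "is_face n R"
  shows "is_face n (face_act w R)"
  unfolding face_act_def using inj_on_sapply[OF w] sapply_image_Omega[OF w] sapply_uminus R
  by (intro is_face_image) (auto simp: bij_betw_def)

lemma is_face_chamber: "w \<in> sperms n \<Longrightarrow> is_face n (chamber n w)"
  unfolding chamber_def using is_face_act is_face_fund_chamber by blast

lemma chamber_scompose:
  assumes "w \<in> sperms n" and "v \<in> sperms n"
  shows "chamber n (scompose w v) = face_act w (chamber n v)"
  unfolding chamber_def using face_act_scompose[OF assms] by simp

lemma fund_chamber_subset: "fund_chamber n \<subseteq> Omega n \<times> Omega n"
  unfolding fund_chamber_def by auto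

lemma sapply_in_chamber_iff:
  assumes w: "w \<in> sperms n" and p: "p \<in> Omega n" and q: "q \<in> Omega n"
  shows "(sapply w p, sapply w q) \<in> chamber n w \<longleftrightarrow> p \<le> q"
  unfolding chamber_def using sapply_in_face_act_iff[OF w fund_chamber_subset p q] p q
  by (simp add: fund_chamber_def)

lemma chamber_antisym:
  assumes w: "w \<in> sperms n" and xy: "(x, y) \<in> chamber n w" and yx: "(y, x) \<in> chamber n w"
  shows "x = y"
proof -
  obtain p q where pq: "p \<in> Omega n" "q \<in> Omega n" "x = sapply w p" "y = sapply w q"
    using xy unfolding chamber_def face_act_iff fund_chamber_def by blast
  then have "p \<le> q" and "q \<le> p"
    using xy yx sapply_in_chamber_iff[OF w] by auto
  with pq show ?thesis by simp
qed

definition lower_set :: "nat \<Rightarrow> (int \<times> int) set \<Rightarrow> int \<Rightarrow> int set" where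
  "lower_set n R x = {y \<in> Omega n. (y, x) \<in> R}"

lemma finite_lower_set: "finite (lower_set n R x)"
  unfolding lower_set_def using finite_Omega by simp

lemma card_lower_set_less:
  assumes T: "is_face n T" and anti: "\<And>x y. (x, y) \<in> T \<Longrightarrow> (y, x) \<in> T \<Longrightarrow> x = y"
    and x: "x \<in> Omega n" and y: "y \<in> Omega n" and xy: "(x, y) \<in> T" and "x \<noteq> y"
  shows "card (lower_set n T x) < card (lower_set n T y)"
proof (rule psubset_card_mono[OF finite_lower_set])
  have "lower_set n T x \<subseteq> lower_set n T y"
    unfolding lower_set_def using is_face_trans[OF T _ xy] by blast
  moreover have "y \<in> lower_set n T y - lower_set n T x"
    unfolding lower_set_def using y is_face_refl[OF T] anti[OF xy] \<open>x \<noteq> y\<close> by auto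
  ultimately show "lower_set n T x \<subset> lower_set n T y" by blast
qed

lemma card_lower_set_chamber:
  assumes w: "w \<in> sperms n" and p: "p \<in> Omega n"
  shows "int (card (lower_set n (chamber n w) (sapply w p))) = p + int n + 1"
proof -
  have "lower_set n (chamber n w) (sapply w p) = sapply w ` {q \<in> Omega n. q \<le> p}"
  proof (intro set_eqI iffI)
    fix y assume "y \<in> lower_set n (chamber n w) (sapply w p)"
    moreover obtain q where "q \<in> Omega n" "sapply w q = y"
      using calculation sapply_surj_Omega[OF w] unfolding lower_set_def by blast
    ultimately show "y \<in> sapply w ` {q \<in> Omega n. q \<le> p}"
      using sapply_in_chamber_iff[OF w _ p] unfolding lower_set_def by auto
  qed (use sapply_in_chamber_iff[OF w _ p] sapply_in_Omega[OF w] in \<open>auto simp: lower_set_def\<close>)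
  moreover have "inj_on (sapply w) {q \<in> Omega n. q \<le> p}"
    by (rule inj_on_subset[OF inj_on_sapply[OF w]]) blast
  moreover have "{q \<in> Omega n. q \<le> p} = {- int n..p}" using p unfolding Omega_def by auto
  ultimately show ?thesis using p unfolding Omega_def by (simp add: card_image)
qed

lemma chamber_inj:
  assumes w: "w \<in> sperms n" and v: "v \<in> sperms n" and eq: "chamber n w = chamber n v"
  shows "w = v"
proof -
  let ?T = "chamber n w"
  have same_value: "sapply w p = sapply v p" if p: "p \<in> Omega n" for p
  proof (rule ccontr)
    assume ne: "sapply w p \<noteq> sapply v p"
    have in_Omega: "sapply w p \<in> Omega n" "sapply v p \<in> Omega n"
      using sapply_in_Omega[OF w p] sapply_in_Omega[OF v p] by auto
    have "card (lower_set n ?T (sapply w p)) = card (lower_set n ?T (sapply v p))"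
      using card_lower_set_chamber[OF w p] card_lower_set_chamber[OF v p] eq by simp
    moreover have "(sapply w p, sapply v p) \<in> ?T \<or> (sapply v p, sapply w p) \<in> ?T"
      using is_face_total[OF is_face_chamber[OF w] in_Omega] .
    ultimately show False
      using card_lower_set_less[OF is_face_chamber[OF w] chamber_antisym[OF w]] in_Omega ne
      by (metis less_irrefl)
  qed
  have "w ! k = v ! k" if "k < n" for k
    using same_value[of "int (k + 1)"] sapply_of_nat[of "k + 1"] that sperms_length[OF w] sperms_length[OF v]
    unfolding Omega_def by simp
  then show ?thesis using sperms_length[OF w] sperms_length[OF v] by (intro nth_equalityI) auto
qed

lemma odd_Omega_0:
  assumes "\<And>x. x \<in> Omega n \<Longrightarrow> f (- x) = - f x"
  shows "f 0 = (0::int)"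
  using assms[of 0] by (simp add: Omega_def)

lemma odd_bij_Omega_values_in_sperms:
  assumes bij: "bij_betw f (Omega n) (Omega n)" and odd: "\<And>x. x \<in> Omega n \<Longrightarrow> f (- x) = - f x"
  shows "map (\<lambda>i. f (int i)) [1..<n+1] \<in> sperms n"
proof -
  have inj: "inj_on f (Omega n)" and into: "\<And>x. x \<in> Omega n \<Longrightarrow> f x \<in> Omega n"
    using bij by (auto simp: bij_betw_def)
  have pos: "int i \<in> Omega n" if "i \<in> {1..n}" for i using that unfolding Omega_def by auto
  define g where "g i = nat \<bar>f (int i)\<bar>" for i
  have "g ` {1..n} \<subseteq> {1..n}"
  proof
    fix z assume "z \<in> g ` {1..n}"
    then obtain i where i: "i \<in> {1..n}" "z = g i" by blast
    have "f (int i) \<noteq> f 0"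
      using inj_onD[OF inj, of "int i" 0] pos[OF i(1)] i(1) by (auto simp: Omega_def)
    then show "z \<in> {1..n}"
      using into[OF pos[OF i(1)]] odd_Omega_0[of n f, OF odd] unfolding i(2) g_def Omega_def by auto
  qed
  moreover have "inj_on g {1..n}"
  proof (rule inj_onI)
    fix i j assume i: "i \<in> {1..n}" and j: "j \<in> {1..n}" and "g i = g j"
    then have "f (int i) = f (int j) \<or> f (int i) = f (- int j)"
      using odd[OF pos[OF j]] unfolding g_def by (auto simp: abs_if split: if_splits)
    then have "int i = int j \<or> int i = - int j"
      using inj pos[OF i] pos[OF j] uminus_in_Omega_iff unfolding inj_on_def by blast
    then show "i = j" using i j by auto
  qed
  ultimately have "g ` {1..n} = {1..n}" by (intro endo_inj_surj) simp_all
  moreover define w where "w = map (\<lambda>i. f (int i)) [1..<n+1]"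
  then have "set (map (\<lambda>x. nat \<bar>x\<bar>) w) = g ` {1..n}"
    unfolding g_def by (auto simp: atLeastLessThanSuc_atLeastAtMost image_image)
  moreover have "length w = n" unfolding w_def by simp
  ultimately have "w \<in> sperms n" unfolding sperms_def by simp
  then show ?thesis unfolding w_def .
qed

lemma sapply_odd_Omega_values:
  assumes odd: "\<And>x. x \<in> Omega n \<Longrightarrow> f (- x) = - f x" and x: "x \<in> Omega n"
  shows "sapply (map (\<lambda>i. f (int i)) [1..<n+1]) x = f x"
proof -
  let ?w = "map (\<lambda>i. f (int i)) [1..<n+1]"
  have pos: "sapply ?w (int i) = f (int i)" if "i \<in> {1..n}" for i
    using that sapply_of_nat[of i ?w] by (auto simp del: upt_Suc)
  consider "x = 0" | "0 < x" | "x < 0" by linarith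
  then show ?thesis
  proof cases
    case 2
    then have "nat x \<in> {1..n}" using x unfolding Omega_def by auto
    with 2 show ?thesis using pos[of "nat x"] by simp
  next
    case 3
    then have "nat (- x) \<in> {1..n}" using x unfolding Omega_def by auto
    with 3 have "sapply ?w (- x) = f (- x)" using pos[of "nat (- x)"] by simp
    then show ?thesis using odd[OF x] sapply_uminus[of ?w x] by simp
  qed (simp add: odd_Omega_0[of n f, OF odd])
qed

lemma bij_odd_Omega_eq_sapply:
  assumes "bij_betw f (Omega n) (Omega n)" and "\<And>x. x \<in> Omega n \<Longrightarrow> f (- x) = - f x"
  obtains w where "w \<in> sperms n" and "\<And>x. x \<in> Omega n \<Longrightarrow> sapply w x = f x"
  using that odd_bij_Omega_values_in_sperms[OF assms] sapply_odd_Omega_values[of n f, OF assms(2)] by blast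

definition face_rank :: "nat \<Rightarrow> (int \<times> int) set \<Rightarrow> int \<Rightarrow> int" where
  "face_rank n T x = int (card (lower_set n T x)) - int n - 1"

context
  fixes n T
  assumes T: "is_face n T" and anti: "\<And>x y. (x, y) \<in> T \<Longrightarrow> (y, x) \<in> T \<Longrightarrow> x = y"
begin

lemma face_rank_in_Omega:
  assumes x: "x \<in> Omega n"
  shows "face_rank n T x \<in> Omega n"
proof -
  have "card (lower_set n T x) \<le> 2 * n + 1"
    using card_mono[OF finite_Omega, of "lower_set n T x"] card_Omega unfolding lower_set_def by auto
  moreover have "x \<in> lower_set n T x" unfolding lower_set_def using x is_face_refl[OF T] by auto
  then have "card (lower_set n T x) \<ge> 1" using finite_lower_set by (metis card_0_eq empty_iff less_one not_le)
  ultimately show ?thesis unfolding face_rank_def Omega_def by auto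
qed

lemma face_rank_le_iff:
  assumes x: "x \<in> Omega n" and y: "y \<in> Omega n"
  shows "(x, y) \<in> T \<longleftrightarrow> face_rank n T x \<le> face_rank n T y"
proof
  assume "(x, y) \<in> T"
  then show "face_rank n T x \<le> face_rank n T y"
    using card_lower_set_less[OF T anti x y] unfolding face_rank_def by (cases "x = y") auto
next
  assume le: "face_rank n T x \<le> face_rank n T y"
  show "(x, y) \<in> T"
  proof (rule ccontr)
    assume "(x, y) \<notin> T"
    then have "(y, x) \<in> T" and "y \<noteq> x" using is_face_total[OF T x y] is_face_refl[OF T x] by auto
    then show False using card_lower_set_less[OF T anti y x] le unfolding face_rank_def by simp
  qed
qed

lemma inj_on_face_rank: "inj_on (face_rank n T) (Omega n)"
proof (rule inj_onI)
  fix x y assume "x \<in> Omega n" "y \<in> Omega n" "face_rank n T x = face_rank n T y"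
  then have "(x, y) \<in> T" and "(y, x) \<in> T" using face_rank_le_iff by auto
  then show "x = y" by (rule anti)
qed

lemma face_rank_uminus:
  assumes x: "x \<in> Omega n"
  shows "face_rank n T (- x) = - face_rank n T x"
proof -
  let ?U = "{y \<in> Omega n. (x, y) \<in> T}"
  have "lower_set n T (- x) = uminus ` ?U"
  proof (intro set_eqI iffI)
    fix y assume "y \<in> lower_set n T (- x)"
    then have "- y \<in> ?U"
      unfolding lower_set_def using is_face_uminus_iff[OF T, where x=x and y="- y"] by auto
    then show "y \<in> uminus ` ?U" by (metis image_eqI minus_minus)
  next
    fix y assume "y \<in> uminus ` ?U"
    then obtain z where "z \<in> ?U" "y = - z" by blast
    then show "y \<in> lower_set n T (- x)" unfolding lower_set_def using is_face_uminus[OF T] by auto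
  qed
  then have "card (lower_set n T (- x)) = card ?U" by (simp add: card_image)
  moreover have "lower_set n T x \<union> ?U = Omega n" and "lower_set n T x \<inter> ?U = {x}"
    unfolding lower_set_def using is_face_total[OF T x] is_face_refl[OF T x] anti x by auto
  then have "card (lower_set n T x) + card ?U = 2 * n + 2"
    using card_Un_Int[OF finite_lower_set, of ?U n T x] finite_Omega card_Omega by simp
  ultimately show ?thesis unfolding face_rank_def by simp
qed

lemma exists_chamber_eq:
  "\<exists>w\<in>sperms n. chamber n w = T"
proof -
  let ?r = "face_rank n T"
  have "?r ` Omega n = Omega n"
    by (rule endo_inj_surj[OF finite_Omega _ inj_on_face_rank]) (use face_rank_in_Omega in blast)
  then have bij_r: "bij_betw ?r (Omega n) (Omega n)"
    using inj_on_face_rank by (simp add: bij_betw_def)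
  define ri where "ri = the_inv_into (Omega n) ?r"
  have bij_ri: "bij_betw ri (Omega n) (Omega n)"
    unfolding ri_def by (rule bij_betw_the_inv_into[OF bij_r])
  have r_ri: "?r (ri y) = y" and ri_r: "ri (?r y) = y" if "y \<in> Omega n" for y
    using that bij_r f_the_inv_into_f_bij_betw the_inv_into_f_f[OF inj_on_face_rank]
    unfolding ri_def by auto
  have "ri (- y) = - ri y" if y: "y \<in> Omega n" for y
    using ri_r[of "- ri y"] face_rank_uminus[of "ri y"] r_ri[OF y] bij_betw_apply[OF bij_ri y] by simp
  then obtain w where w: "w \<in> sperms n" and w_ri: "\<And>x. x \<in> Omega n \<Longrightarrow> sapply w x = ri x"
    using bij_odd_Omega_eq_sapply[OF bij_ri] by blast
  have "chamber n w = T"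
  proof (intro set_eqI iffI)
    fix z assume "z \<in> chamber n w"
    then obtain p q where "p \<in> Omega n" "q \<in> Omega n" "p \<le> q" "z = (ri p, ri q)"
      unfolding chamber_def face_act_def fund_chamber_def using w_ri by auto
    then show "z \<in> T"
      using face_rank_le_iff r_ri bij_betw_apply[OF bij_ri] by auto
  next
    fix z assume zT: "z \<in> T"
    then obtain x y where z: "z = (x, y)" "x \<in> Omega n" "y \<in> Omega n"
      using is_face_subset[OF T] by auto
    then have "(?r x, ?r y) \<in> fund_chamber n"
      using zT face_rank_le_iff face_rank_in_Omega unfolding fund_chamber_def by auto
    moreover have "x = sapply w (?r x)" "y = sapply w (?r y)"
      using z w_ri face_rank_in_Omega ri_r by auto
    ultimately show "z \<in> chamber n w" unfolding chamber_def face_act_iff z by blast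
  qed
  with w show ?thesis by blast
qed

end

definition chamber_perm :: "nat \<Rightarrow> (int \<times> int) set \<Rightarrow> int list" where
  "chamber_perm n H = (THE w. w \<in> sperms n \<and> tits_prod H (fund_chamber n) = chamber n w)"

lemma chamber_perm:
  assumes H: "is_face n H"
  shows "chamber_perm n H \<in> sperms n" and "tits_prod H (fund_chamber n) = chamber n (chamber_perm n H)"
proof -
  have anti: "x = y" if "(x, y) \<in> tits_prod H (fund_chamber n)" "(y, x) \<in> tits_prod H (fund_chamber n)" for x y
    using that tits_prod_subset[of H] unfolding tits_prod_def fund_chamber_def by auto
  obtain w where w: "w \<in> sperms n" "chamber n w = tits_prod H (fund_chamber n)"
    using exists_chamber_eq[OF is_face_tits_prod[OF H is_face_fund_chamber] anti] by blast
  have "\<exists>!w. w \<in> sperms n \<and> tits_prod H (fund_chamber n) = chamber n w"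
    using w chamber_inj by (intro ex1I[of _ w]) auto
  then have "chamber_perm n H \<in> sperms n \<and> tits_prod H (fund_chamber n) = chamber n (chamber_perm n H)"
    unfolding chamber_perm_def by (rule theI')
  then show "chamber_perm n H \<in> sperms n" "tits_prod H (fund_chamber n) = chamber n (chamber_perm n H)"
    by auto
qed

lemma chamber_perm_eqI:
  assumes "is_face n H" and "w \<in> sperms n" and "tits_prod H (fund_chamber n) = chamber n w"
  shows "chamber_perm n H = w"
  using chamber_inj[OF chamber_perm(1)[OF assms(1)] assms(2)] chamber_perm(2)[OF assms(1)] assms(3)
  by simp

section \<open>Standard faces and the type of a face\<close>

text \<open>The standard face of type \<open>L \<subseteq> {0..<n}\<close> cuts \<open>Omega n\<close> between \<open>t\<close> and \<open>t + 1\<close>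
  for \<open>t \<in> L\<close> and, symmetrically, between \<open>-t-1\<close> and \<open>-t\<close>; \<open>block L x\<close> numbers the
  resulting blocks, with the block of \<open>0\<close> numbered \<open>0\<close>.\<close>
definition block :: "nat set \<Rightarrow> int \<Rightarrow> int" where
  "block L x = (if 0 \<le> x then int (card {l \<in> L. int l < x}) else - int (card {l \<in> L. int l < - x}))"

definition cut :: "nat set \<Rightarrow> int \<Rightarrow> bool" where
  "cut L t \<longleftrightarrow> (if 0 \<le> t then nat t \<in> L else nat (- t - 1) \<in> L)"

definition std_face :: "nat \<Rightarrow> nat set \<Rightarrow> (int \<times> int) set" where
  "std_face n L = {(x, y). x \<in> Omega n \<and> y \<in> Omega n \<and> block L x \<le> block L y}"

definition face_type :: "nat \<Rightarrow> (int \<times> int) set \<Rightarrow> nat set" where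
  "face_type n R = {i \<in> {..<n}. \<exists>x\<in>Omega n. card (lower_set n R x) = n + 1 + i}"

lemma block_mono:
  assumes "finite L" and "x \<le> y"
  shows "block L x \<le> block L y"
proof -
  have "card {l \<in> L. int l < a} \<le> card {l \<in> L. int l < b}" if "a \<le> b" for a b
    by (rule card_mono) (use assms that in auto)
  from this[of x y] this[of "- y" "- x"] show ?thesis using assms unfolding block_def by auto
qed

lemma block_uminus: "block L (- x) = - block L x"
  unfolding block_def by auto

lemma block_Suc_nonneg:
  assumes L: "finite L" and t: "0 \<le> t"
  shows "block L (t + 1) = block L t + (if nat t \<in> L then 1 else 0)"
proof -
  have "int l < t + 1 \<longleftrightarrow> int l < t \<or> l = nat t" for l using t by auto
  then have "{l \<in> L. int l < t + 1} = {l \<in> L. int l < t} \<union> (if nat t \<in> L then {nat t} else {})"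
    by auto
  then have "card {l \<in> L. int l < t + 1} = card {l \<in> L. int l < t} + (if nat t \<in> L then 1 else 0)"
    using L by (auto simp: card_insert_if)
  then show ?thesis unfolding block_def using t by simp
qed

lemma block_Suc:
  assumes L: "finite L"
  shows "block L (t + 1) = block L t + (if cut L t then 1 else 0)"
proof (cases "0 \<le> t")
  case True
  then show ?thesis using block_Suc_nonneg[OF L True] unfolding cut_def by simp
next
  case False
  define s where "s = - t - 1"
  have s: "0 \<le> s" using False unfolding s_def by simp
  have "block L (t + 1) = - block L s" and "block L t = - block L (s + 1)"
    using block_uminus[of L s] block_uminus[of L "s + 1"] unfolding s_def by (simp_all add: add.commute)
  then show ?thesis using block_Suc_nonneg[OF L s] False unfolding cut_def s_def by simp
qed

lemma int_interval_chain:
  fixes q p :: int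
  assumes "q \<le> p" and step: "\<And>t. q \<le> t \<Longrightarrow> t < p \<Longrightarrow> S (t + 1) t"
    and refl: "S q q" and trans: "\<And>a b c. S a b \<Longrightarrow> S b c \<Longrightarrow> S a c"
  shows "S p q"
proof -
  have "S (q + int k) q" if "q + int k \<le> p" for k
    using that
  proof (induction k)
    case (Suc k)
    then have "S (q + int k + 1) (q + int k)" and "S (q + int k) q" using step by simp_all
    then have "S (q + int k + 1) q" using trans by blast
    then show ?case by (simp add: algebra_simps)
  qed (simp add: refl)
  from this[of "nat (p - q)"] assms(1) show ?thesis by simp
qed

lemma block_le_iff_no_cut:
  assumes L: "finite L" and "q \<le> p"
  shows "block L p \<le> block L q \<longleftrightarrow> (\<forall>t. q \<le> t \<and> t < p \<longrightarrow> \<not> cut L t)"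
proof
  assume le: "block L p \<le> block L q"
  show "\<forall>t. q \<le> t \<and> t < p \<longrightarrow> \<not> cut L t"
  proof (intro allI impI)
    fix t assume "q \<le> t \<and> t < p"
    then have "block L q \<le> block L t" and "block L (t + 1) \<le> block L p"
      using block_mono[OF L] by auto
    then show "\<not> cut L t" using le block_Suc[OF L, of t] by auto
  qed
next
  assume "\<forall>t. q \<le> t \<and> t < p \<longrightarrow> \<not> cut L t"
  then have "block L (t + 1) \<le> block L t" if "q \<le> t" "t < p" for t
    using that block_Suc[OF L, of t] by simp
  then show "block L p \<le> block L q"
    by (intro int_interval_chain[where S="\<lambda>a b. block L a \<le> block L b", OF \<open>q \<le> p\<close>]) auto
qed

lemma is_face_std_face: "finite L \<Longrightarrow> is_face n (std_face n L)"
  unfolding is_face_def std_face_def using block_uminus[of L] by (auto simp: Omega_def)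

lemma std_face_subset: "std_face n L \<subseteq> Omega n \<times> Omega n"
  unfolding std_face_def by auto

lemma face_le_iff_steps:
  assumes P: "is_face n P" and mono: "\<And>p q. p \<in> Omega n \<Longrightarrow> q \<in> Omega n \<Longrightarrow> p \<le> q \<Longrightarrow> (p, q) \<in> P"
    and p: "p \<in> Omega n" and q: "q \<in> Omega n" and "q \<le> p"
  shows "(p, q) \<in> P \<longleftrightarrow> (\<forall>t. q \<le> t \<and> t < p \<longrightarrow> (t + 1, t) \<in> P)"
proof
  assume pq: "(p, q) \<in> P"
  show "\<forall>t. q \<le> t \<and> t < p \<longrightarrow> (t + 1, t) \<in> P"
  proof (intro allI impI)
    fix t assume t: "q \<le> t \<and> t < p"
    then have "t \<in> Omega n" and "t + 1 \<in> Omega n" using p q unfolding Omega_def by auto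
    then have "(t + 1, p) \<in> P" and "(q, t) \<in> P" using mono p q t by auto
    then show "(t + 1, t) \<in> P" using is_face_trans[OF P] pq by blast
  qed
next
  assume "\<forall>t. q \<le> t \<and> t < p \<longrightarrow> (t + 1, t) \<in> P"
  then show "(p, q) \<in> P"
    using is_face_refl[OF P q] is_face_trans[OF P]
    by (intro int_interval_chain[where S="\<lambda>a b. (a, b) \<in> P", OF \<open>q \<le> p\<close>]) auto
qed

text \<open>The steps \<open>(t + 1, t)\<close> with \<open>t < 0\<close> are mirror images of those with \<open>t \<ge> 0\<close>.\<close>
lemma face_eq_std_face:
  assumes P: "is_face n P" and mono: "\<And>p q. p \<in> Omega n \<Longrightarrow> q \<in> Omega n \<Longrightarrow> p \<le> q \<Longrightarrow> (p, q) \<in> P"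
  shows "P = std_face n {i \<in> {..<n}. (int i + 1, int i) \<notin> P}"
proof -
  define L where "L = {i \<in> {..<n}. (int i + 1, int i) \<notin> P}"
  have L: "finite L" unfolding L_def by simp
  have step: "(t + 1, t) \<in> P \<longleftrightarrow> \<not> cut L t" if "- int n \<le> t" "t < int n" for t
  proof (cases "0 \<le> t")
    case True
    then show ?thesis using that unfolding L_def cut_def by auto
  next
    case False
    define s where "s = - t - 1"
    have "(t + 1, t) = (- s, - (s + 1))" unfolding s_def by simp
    then have "(t + 1, t) \<in> P \<longleftrightarrow> (s + 1, s) \<in> P"
      using is_face_uminus_iff[OF P, where x="s + 1" and y=s] by simp
    also have "\<dots> \<longleftrightarrow> \<not> cut L t"
      using that False unfolding L_def cut_def s_def by auto
    finally show ?thesis .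
  qed
  have "(p, q) \<in> P \<longleftrightarrow> block L p \<le> block L q" if p: "p \<in> Omega n" and q: "q \<in> Omega n" for p q
  proof (cases "p \<le> q")
    case True
    then show ?thesis using mono[OF p q] block_mono[OF L] by simp
  next
    case False
    then have "\<forall>t. q \<le> t \<and> t < p \<longrightarrow> - int n \<le> t \<and> t < int n" using p q unfolding Omega_def by auto
    then show ?thesis
      using False face_le_iff_steps[OF P mono p q] block_le_iff_no_cut[OF L] step by auto
  qed
  then show ?thesis
    using is_face_subset[OF P] unfolding std_face_def L_def[symmetric] by auto
qed

lemma Omega_downset_eq:
  assumes D: "D \<subseteq> Omega n" and down: "\<And>y z. y \<in> D \<Longrightarrow> z \<in> Omega n \<Longrightarrow> z \<le> y \<Longrightarrow> z \<in> D"
    and card: "card D = n + 1 + i" and i: "i < n"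
  shows "D = {- int n..int i}"
proof (cases "int i \<in> D")
  case True
  have "{- int n..int i} \<subseteq> D" using down[OF True] i unfolding Omega_def by auto
  moreover have "finite D" using D finite_Omega finite_subset by blast
  ultimately show ?thesis using card by (intro card_subset_eq[symmetric]) auto
next
  case False
  then have "D \<subseteq> {- int n..int i - 1}"
    using down[of _ "int i"] D i unfolding Omega_def by force
  then have "card D \<le> n + i" using card_mono[of "{- int n..int i - 1}" D] by simp
  with card show ?thesis by simp
qed

lemma lower_set_std_face:
  "x \<in> Omega n \<Longrightarrow> lower_set n (std_face n L) x = {y \<in> Omega n. block L y \<le> block L x}"
  unfolding lower_set_def std_face_def by auto

lemma lower_set_std_face_at_cut:
  assumes finL: "finite L" and i: "i < n" "i \<in> L"
  shows "lower_set n (std_face n L) (int i) = {- int n..int i}"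
proof -
  have step: "block L (int i + 1) = block L (int i) + 1"
    using block_Suc[OF finL] i unfolding cut_def by simp
  have "{y \<in> Omega n. block L y \<le> block L (int i)} = {- int n..int i}"
  proof (intro set_eqI iffI)
    fix y assume y: "y \<in> {y \<in> Omega n. block L y \<le> block L (int i)}"
    show "y \<in> {- int n..int i}"
    proof (rule ccontr)
      assume "y \<notin> {- int n..int i}"
      then have "int i + 1 \<le> y" using y unfolding Omega_def by auto
      then have "block L (int i + 1) \<le> block L y" by (rule block_mono[OF finL])
      with y step show False by simp
    qed
  next
    fix y assume "y \<in> {- int n..int i}"
    then show "y \<in> {y \<in> Omega n. block L y \<le> block L (int i)}"
      using block_mono[OF finL, of y "int i"] i unfolding Omega_def by auto
  qed
  then show ?thesis using lower_set_std_face i unfolding Omega_def by simp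
qed

lemma cut_if_lower_set_std_face:
  assumes finL: "finite L" and x: "x \<in> Omega n" and i: "i < n"
    and eq: "lower_set n (std_face n L) x = {- int n..int i}"
  shows "i \<in> L"
proof -
  have eq': "{y \<in> Omega n. block L y \<le> block L x} = {- int n..int i}"
    using eq lower_set_std_face[OF x] by simp
  have "int i \<in> {y \<in> Omega n. block L y \<le> block L x}" unfolding eq' using i by simp
  moreover have "int i + 1 \<notin> {y \<in> Omega n. block L y \<le> block L x}" unfolding eq' by simp
  moreover have "int i + 1 \<in> Omega n" using i unfolding Omega_def by simp
  ultimately have "block L (int i) \<le> block L x" and "\<not> block L (int i + 1) \<le> block L x"
    by auto
  then show "i \<in> L" using block_Suc[OF finL, of "int i"] unfolding cut_def by (cases "i \<in> L") auto
qed

lemma face_type_std_face: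
  assumes L: "L \<subseteq> {..<n}"
  shows "face_type n (std_face n L) = L"
proof -
  have finL: "finite L" using L finite_subset by blast
  have "(\<exists>x\<in>Omega n. card (lower_set n (std_face n L) x) = n + 1 + i) \<longleftrightarrow> i \<in> L" if i: "i < n" for i
  proof
    assume "\<exists>x\<in>Omega n. card (lower_set n (std_face n L) x) = n + 1 + i"
    then obtain x where x: "x \<in> Omega n" and card: "card (lower_set n (std_face n L) x) = n + 1 + i"
      by blast
    have "lower_set n (std_face n L) x = {- int n..int i}"
      using lower_set_std_face[OF x] card i block_mono[OF finL]
      by (intro Omega_downset_eq) (auto, fastforce)
    then show "i \<in> L" by (rule cut_if_lower_set_std_face[OF finL x i])
  next
    assume "i \<in> L"
    then have "card (lower_set n (std_face n L) (int i)) = n + 1 + i"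
      using lower_set_std_face_at_cut[OF finL i] by simp
    moreover have "int i \<in> Omega n" using i unfolding Omega_def by simp
    ultimately show "\<exists>x\<in>Omega n. card (lower_set n (std_face n L) x) = n + 1 + i" by blast
  qed
  then show ?thesis using L unfolding face_type_def by auto
qed

lemma lower_set_face_act:
  assumes w: "w \<in> sperms n" and R: "R \<subseteq> Omega n \<times> Omega n" and x: "x \<in> Omega n"
  shows "lower_set n (face_act w R) (sapply w x) = sapply w ` lower_set n R x"
proof (intro set_eqI iffI)
  fix y assume "y \<in> lower_set n (face_act w R) (sapply w x)"
  moreover obtain y' where "y' \<in> Omega n" "sapply w y' = y"
    using calculation sapply_surj_Omega[OF w] unfolding lower_set_def by blast
  ultimately show "y \<in> sapply w ` lower_set n R x"
    using sapply_in_face_act_iff[OF w R _ x] unfolding lower_set_def by auto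
qed (use sapply_in_face_act_iff[OF w R _ x] sapply_in_Omega[OF w] in \<open>auto simp: lower_set_def\<close>)

lemma face_type_face_act:
  assumes w: "w \<in> sperms n" and R: "R \<subseteq> Omega n \<times> Omega n"
  shows "face_type n (face_act w R) = face_type n R"
proof -
  have card_eq: "card (lower_set n (face_act w R) (sapply w x)) = card (lower_set n R x)"
    if x: "x \<in> Omega n" for x
  proof -
    have "inj_on (sapply w) (lower_set n R x)"
      by (rule inj_on_subset[OF inj_on_sapply[OF w]]) (auto simp: lower_set_def)
    then show ?thesis using lower_set_face_act[OF w R x] by (simp add: card_image)
  qed
  have "(\<exists>x\<in>Omega n. card (lower_set n (face_act w R) x) = m) \<longleftrightarrow> (\<exists>x\<in>Omega n. card (lower_set n R x) = m)"
    for m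
  proof
    assume "\<exists>y\<in>Omega n. card (lower_set n (face_act w R) y) = m"
    then obtain y where y: "y \<in> Omega n" "card (lower_set n (face_act w R) y) = m" by blast
    moreover obtain x where "x \<in> Omega n" "sapply w x = y" using sapply_surj_Omega[OF w y(1)] by blast
    ultimately show "\<exists>x\<in>Omega n. card (lower_set n R x) = m" using card_eq by metis
  next
    assume "\<exists>x\<in>Omega n. card (lower_set n R x) = m"
    then obtain x where "x \<in> Omega n" "card (lower_set n R x) = m" by blast
    then show "\<exists>y\<in>Omega n. card (lower_set n (face_act w R) y) = m"
      using card_eq sapply_in_Omega[OF w] by metis
  qed
  then show ?thesis unfolding face_type_def by simp
qed

lemma face_type_subset: "face_type n R \<subseteq> {..<n}"
  unfolding face_type_def by auto

lemma DesB_subset: "1 \<le> n \<Longrightarrow> DesB n w \<subseteq> {..<n}"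
  unfolding DesB_def by auto

section \<open>Every face is a translate of a standard face\<close>

lemma DesB_iff_sapply:
  assumes w: "w \<in> sperms n" and i: "i < n"
  shows "i \<in> DesB n w \<longleftrightarrow> sapply w (int i) > sapply w (int i + 1)"
  using i valB_eq_sapply[OF w, of i] valB_eq_sapply[OF w, of "i + 1"]
  unfolding DesB_def by (auto simp: add.commute)

lemma face_pullback_chamber_perm:
  assumes H: "is_face n H"
  defines "w \<equiv> chamber_perm n H"
  shows "tits_prod (face_pullback n w H) (face_pullback n w (fund_chamber n)) = fund_chamber n"
proof -
  have w: "w \<in> sperms n" unfolding w_def by (rule chamber_perm(1)[OF H])
  have "face_pullback n w (tits_prod H (fund_chamber n)) = face_pullback n w (chamber n w)"
    using chamber_perm(2)[OF H] unfolding w_def by simp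
  then show ?thesis
    unfolding face_pullback_tits_prod chamber_def face_pullback_act[OF w fund_chamber_subset] .
qed

lemma face_pullback_chamber_perm_eq_std_face:
  assumes H: "is_face n H"
  defines "w \<equiv> chamber_perm n H"
  shows "face_pullback n w H = std_face n {i \<in> {..<n}. (int i + 1, int i) \<notin> face_pullback n w H}"
    and "face_type n H = {i \<in> {..<n}. (int i + 1, int i) \<notin> face_pullback n w H}"
proof -
  have w: "w \<in> sperms n" unfolding w_def by (rule chamber_perm(1)[OF H])
  let ?H' = "face_pullback n w H" and ?L = "{i \<in> {..<n}. (int i + 1, int i) \<notin> face_pullback n w H}"
  have "(p, q) \<in> ?H'" if "p \<in> Omega n" "q \<in> Omega n" "p \<le> q" for p q
    using that face_pullback_chamber_perm[OF H] tits_prod_subset unfolding w_def fund_chamber_def by blast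
  then show H': "?H' = std_face n ?L"
    by (rule face_eq_std_face[OF is_face_pullback[OF w H]])
  have "face_type n H = face_type n (face_act w ?H')"
    using face_act_pullback[OF w is_face_subset[OF H]] by simp
  also have "\<dots> = ?L"
    unfolding face_type_face_act[OF w face_pullback_subset] by (subst H', rule face_type_std_face) auto
  finally show "face_type n H = ?L" .
qed

lemma face_eq_act_std_face:
  assumes H: "is_face n H"
  shows "H = face_act (chamber_perm n H) (std_face n (face_type n H))"
  using face_act_pullback[OF chamber_perm(1)[OF H] is_face_subset[OF H]]
    face_pullback_chamber_perm_eq_std_face[OF H] by simp

lemma DesB_chamber_perm_subset:
  assumes H: "is_face n H" and n: "1 \<le> n"
  shows "DesB n (chamber_perm n H) \<subseteq> face_type n H"
proof
  define w where "w = chamber_perm n H"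
  have w: "w \<in> sperms n" unfolding w_def by (rule chamber_perm(1)[OF H])
  fix i assume "i \<in> DesB n (chamber_perm n H)"
  moreover from this have i: "i < n" using DesB_subset[OF n] by auto
  ultimately have desc: "sapply w (int i) > sapply w (int i + 1)"
    using DesB_iff_sapply[OF w i] unfolding w_def by simp
  show "i \<in> face_type n H"
  proof (rule ccontr)
    assume "i \<notin> face_type n H"
    then have "(int i + 1, int i) \<in> face_pullback n w H"
      using face_pullback_chamber_perm_eq_std_face(2)[OF H] i unfolding w_def by auto
    moreover have "(int i, int i + 1) \<in> fund_chamber n" using i unfolding fund_chamber_def Omega_def by auto
    ultimately have "(int i, int i + 1) \<in> face_pullback n w (fund_chamber n)"
      using face_pullback_chamber_perm[OF H] unfolding w_def tits_prod_def by blast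
    with desc show False unfolding face_pullback_def fund_chamber_def by auto
  qed
qed

lemma sapply_le_Suc_if_not_cut:
  assumes w: "w \<in> sperms n" and D: "DesB n w \<subseteq> L"
    and t: "- int n \<le> t" "t < int n" and not_cut: "\<not> cut L t"
  shows "sapply w t \<le> sapply w (t + 1)"
proof -
  have no_desc: "sapply w (int i) \<le> sapply w (int i + 1)" if "i < n" "i \<notin> L" for i
    using that D DesB_iff_sapply[OF w, of i] by auto
  show ?thesis
  proof (cases "0 \<le> t")
    case True
    then show ?thesis using no_desc[of "nat t"] t not_cut unfolding cut_def by simp
  next
    case False
    then have "sapply w (int (nat (- t - 1))) \<le> sapply w (int (nat (- t - 1)) + 1)"
      using no_desc[of "nat (- t - 1)"] t not_cut unfolding cut_def by simp
    then have "sapply w (- t - 1) \<le> sapply w (- t)" using False by simp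
    then show ?thesis using sapply_uminus[of w "t + 1"] sapply_uminus[of w t] by simp
  qed
qed

lemma sapply_less_if_same_block:
  assumes w: "w \<in> sperms n" and L: "L \<subseteq> {..<n}" and D: "DesB n w \<subseteq> L"
    and p: "p \<in> Omega n" and q: "q \<in> Omega n" and "p < q" and same: "block L p = block L q"
  shows "sapply w p < sapply w q"
proof -
  have finL: "finite L" using L finite_subset by blast
  have "sapply w p \<le> sapply w q"
  proof (rule int_interval_chain[where S="\<lambda>a b. sapply w b \<le> sapply w a"])
    fix t assume t: "p \<le> t" "t < q"
    then have "block L q \<le> block L p" using same by simp
    then have "\<not> cut L t" using block_le_iff_no_cut[OF finL, of p q] t \<open>p < q\<close> by auto
    then show "sapply w t \<le> sapply w (t + 1)"
      using sapply_le_Suc_if_not_cut[OF w D] t p q unfolding Omega_def by auto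
  qed (use \<open>p < q\<close> in auto)
  moreover have "sapply w p \<noteq> sapply w q" using inj_on_sapply[OF w] p q \<open>p < q\<close> unfolding inj_on_def by auto
  ultimately show ?thesis by simp
qed

lemma tits_prod_std_face_pullback_fund_chamber:
  assumes w: "w \<in> sperms n" and L: "L \<subseteq> {..<n}" and D: "DesB n w \<subseteq> L"
  shows "tits_prod (std_face n L) (face_pullback n w (fund_chamber n)) = fund_chamber n"
proof -
  have finL: "finite L" using L finite_subset by blast
  have "(block L p \<le> block L q \<and> (block L q \<le> block L p \<longrightarrow> sapply w p \<le> sapply w q)) \<longleftrightarrow> p \<le> q"
    if p: "p \<in> Omega n" and q: "q \<in> Omega n" for p q
  proof (cases "p \<le> q")
    case True
    then show ?thesis
      using block_mono[OF finL True] sapply_less_if_same_block[OF w L D p q] by (cases "p = q") auto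
  next
    case False
    then show ?thesis
      using block_mono[OF finL, of q p] sapply_less_if_same_block[OF w L D q p] by auto
  qed
  then show ?thesis
    unfolding tits_prod_def std_face_def face_pullback_def fund_chamber_def
    using sapply_in_Omega[OF w] by auto
qed

lemma tits_prod_act_std_face_fund_chamber:
  assumes w: "w \<in> sperms n" and L: "L \<subseteq> {..<n}" and D: "DesB n w \<subseteq> L"
  shows "tits_prod (face_act w (std_face n L)) (fund_chamber n) = chamber n w"
proof -
  have "tits_prod (face_act w (std_face n L)) (fund_chamber n) \<subseteq> Omega n \<times> Omega n"
    using face_act_subset[OF w std_face_subset] tits_prod_subset by blast
  moreover have "face_pullback n w (tits_prod (face_act w (std_face n L)) (fund_chamber n)) = fund_chamber n"
    unfolding face_pullback_tits_prod face_pullback_act[OF w std_face_subset]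
    by (rule tits_prod_std_face_pullback_fund_chamber[OF w L D])
  ultimately show ?thesis
    unfolding chamber_def using face_act_pullback[OF w] by metis
qed

lemma act_std_face:
  assumes w: "w \<in> sperms n" and L: "L \<subseteq> {..<n}" and D: "DesB n w \<subseteq> L"
  shows "is_face n (face_act w (std_face n L))"
    and "chamber_perm n (face_act w (std_face n L)) = w"
    and "face_type n (face_act w (std_face n L)) = L"
proof -
  show face: "is_face n (face_act w (std_face n L))"
    using is_face_act[OF w is_face_std_face] L finite_subset by blast
  show "chamber_perm n (face_act w (std_face n L)) = w"
    by (rule chamber_perm_eqI[OF face w tits_prod_act_std_face_fund_chamber[OF w L D]])
  show "face_type n (face_act w (std_face n L)) = L"
    using face_type_face_act[OF w std_face_subset] face_type_std_face[OF L] by simp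
qed

section \<open>Solomon's theorem for type B\<close>

definition faces_of_type :: "nat \<Rightarrow> nat set \<Rightarrow> (int \<times> int) set set" where
  "faces_of_type n L = {H. is_face n H \<and> face_type n H = L}"

definition tits_count :: "nat \<Rightarrow> nat set \<Rightarrow> nat set \<Rightarrow> (int \<times> int) set \<Rightarrow> nat" where
  "tits_count n J K H = card {p \<in> faces_of_type n J \<times> faces_of_type n K. tits_prod (snd p) (fst p) = H}"

text \<open>The coefficient of \<open>y\<close> in \<open>X\<^sub>J X\<^sub>K\<close>.\<close>
definition descent_pair_count :: "nat \<Rightarrow> nat set \<Rightarrow> nat set \<Rightarrow> int list \<Rightarrow> nat" where
  "descent_pair_count n J K y = card {p \<in> sperms n \<times> sperms n.
     DesB n (fst p) \<subseteq> J \<and> DesB n (snd p) \<subseteq> K \<and> scompose (fst p) (snd p) = y}"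

lemma finite_faces_of_type: "finite (faces_of_type n L)"
proof -
  have "faces_of_type n L \<subseteq> Pow (Omega n \<times> Omega n)"
    unfolding faces_of_type_def using is_face_subset by blast
  then show ?thesis by (rule finite_subset) (simp add: finite_Omega)
qed

lemma bij_betw_face_act_faces_of_type:
  assumes v: "v \<in> sperms n"
  shows "bij_betw (face_act v) (faces_of_type n L) (faces_of_type n L)"
proof -
  have inj: "inj_on (face_act v) (faces_of_type n L)"
    using face_act_inj[OF v] is_face_subset by (auto simp: faces_of_type_def inj_on_def)
  moreover have "face_act v ` faces_of_type n L \<subseteq> faces_of_type n L"
    using is_face_act[OF v] face_type_face_act[OF v] is_face_subset unfolding faces_of_type_def by auto
  ultimately show ?thesis
    by (simp add: bij_betw_def endo_inj_surj finite_faces_of_type)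
qed

lemma bij_betw_act_std_face:
  assumes n: "1 \<le> n" and L: "L \<subseteq> {..<n}"
  shows "bij_betw (\<lambda>w. face_act w (std_face n L)) {w \<in> sperms n. DesB n w \<subseteq> L} (faces_of_type n L)"
proof (rule bij_betw_byWitness[where f' = "chamber_perm n"])
  show "\<forall>w\<in>{w \<in> sperms n. DesB n w \<subseteq> L}. chamber_perm n (face_act w (std_face n L)) = w"
    using act_std_face(2)[OF _ L] by blast
  show "\<forall>H\<in>faces_of_type n L. face_act (chamber_perm n H) (std_face n L) = H"
    using face_eq_act_std_face unfolding faces_of_type_def by auto
  show "(\<lambda>w. face_act w (std_face n L)) ` {w \<in> sperms n. DesB n w \<subseteq> L} \<subseteq> faces_of_type n L"
    using act_std_face(1,3)[OF _ L] unfolding faces_of_type_def by auto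
  show "chamber_perm n ` faces_of_type n L \<subseteq> {w \<in> sperms n. DesB n w \<subseteq> L}"
    using chamber_perm(1) DesB_chamber_perm_subset[OF _ n] unfolding faces_of_type_def by auto
qed

lemma tits_count_face_act:
  assumes v: "v \<in> sperms n" and H: "is_face n H"
  shows "tits_count n J K (face_act v H) = tits_count n J K H"
proof -
  have faces: "is_face n F" if "F \<in> faces_of_type n L" for F L
    using that unfolding faces_of_type_def by simp
  have "bij_betw (map_prod (face_act v) (face_act v))
      {p \<in> faces_of_type n J \<times> faces_of_type n K. tits_prod (snd p) (fst p) = H}
      {p \<in> faces_of_type n J \<times> faces_of_type n K. tits_prod (snd p) (fst p) = face_act v H}"
  proof (rule bij_betw_Collect)
    show "bij_betw (map_prod (face_act v) (face_act v)) (faces_of_type n J \<times> faces_of_type n K)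
        (faces_of_type n J \<times> faces_of_type n K)"
      by (intro bij_betw_map_prod bij_betw_face_act_faces_of_type[OF v])
    fix p assume "p \<in> faces_of_type n J \<times> faces_of_type n K"
    then have "is_face n (fst p)" and "is_face n (snd p)" using faces by auto
    then show "tits_prod (snd (map_prod (face_act v) (face_act v) p)) (fst (map_prod (face_act v) (face_act v) p))
        = face_act v H \<longleftrightarrow> tits_prod (snd p) (fst p) = H"
      using face_act_tits_prod[OF v] face_act_inj[OF v] is_face_subset is_face_tits_prod H
      by (cases p) (simp, metis)
  qed
  then show ?thesis unfolding tits_count_def by (simp add: bij_betw_same_card)
qed

lemma chamber_scompose_eq_tits_prod:
  assumes w: "w \<in> sperms n" and v: "v \<in> sperms n"
    and J: "J \<subseteq> {..<n}" and K: "K \<subseteq> {..<n}" and DJ: "DesB n w \<subseteq> J" and DK: "DesB n v \<subseteq> K"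
  shows "chamber n (scompose w v)
    = tits_prod (tits_prod (face_act w (face_act v (std_face n K))) (face_act w (std_face n J))) (fund_chamber n)"
proof -
  have "chamber n (scompose w v) = face_act w (tits_prod (face_act v (std_face n K)) (fund_chamber n))"
    using chamber_scompose[OF w v] tits_prod_act_std_face_fund_chamber[OF v K DK] by simp
  also have "\<dots> = tits_prod (face_act w (face_act v (std_face n K))) (face_act w (fund_chamber n))"
    by (rule face_act_tits_prod[OF w face_act_subset[OF v std_face_subset] fund_chamber_subset])
  also have "face_act w (fund_chamber n) = tits_prod (face_act w (std_face n J)) (fund_chamber n)"
    using tits_prod_act_std_face_fund_chamber[OF w J DJ] unfolding chamber_def by simp
  finally show ?thesis by (simp add: tits_prod_assoc)
qed

lemma descent_pair_count_eq_card_face_pairs: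
  assumes n: "1 \<le> n" and J: "J \<subseteq> {..<n}" and K: "K \<subseteq> {..<n}" and y: "y \<in> sperms n"
  shows "descent_pair_count n J K y = card {p \<in> faces_of_type n J \<times> faces_of_type n K.
    tits_prod (tits_prod (face_act (chamber_perm n (fst p)) (snd p)) (fst p)) (fund_chamber n) = chamber n y}"
proof -
  let ?SJ = "{w \<in> sperms n. DesB n w \<subseteq> J}" and ?SK = "{w \<in> sperms n. DesB n w \<subseteq> K}"
  let ?f = "map_prod (\<lambda>w. face_act w (std_face n J)) (\<lambda>v. face_act v (std_face n K))"
  have bij: "bij_betw ?f {p \<in> ?SJ \<times> ?SK. scompose (fst p) (snd p) = y}
      {p \<in> faces_of_type n J \<times> faces_of_type n K.
        tits_prod (tits_prod (face_act (chamber_perm n (fst p)) (snd p)) (fst p)) (fund_chamber n) = chamber n y}"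
  proof (rule bij_betw_Collect)
    show "bij_betw ?f (?SJ \<times> ?SK) (faces_of_type n J \<times> faces_of_type n K)"
      by (intro bij_betw_map_prod bij_betw_act_std_face n J K)
    fix p assume "p \<in> ?SJ \<times> ?SK"
    then obtain w v where p: "p = (w, v)" and w: "w \<in> sperms n" "DesB n w \<subseteq> J"
      and v: "v \<in> sperms n" "DesB n v \<subseteq> K" by auto
    have "chamber n (scompose w v) = chamber n y \<longleftrightarrow> scompose w v = y"
      using chamber_inj[OF scompose_in_sperms[OF w(1) v(1)] y] by auto
    then show "tits_prod (tits_prod (face_act (chamber_perm n (fst (?f p))) (snd (?f p))) (fst (?f p)))
        (fund_chamber n) = chamber n y \<longleftrightarrow> scompose (fst p) (snd p) = y"
      unfolding p using chamber_scompose_eq_tits_prod[OF w(1) v(1) J K w(2) v(2)] act_std_face(2)[OF w(1) J w(2)]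
      by simp
  qed
  have "{p \<in> ?SJ \<times> ?SK. scompose (fst p) (snd p) = y} = {p \<in> sperms n \<times> sperms n.
      DesB n (fst p) \<subseteq> J \<and> DesB n (snd p) \<subseteq> K \<and> scompose (fst p) (snd p) = y}"
    by (unfold set_eq_iff mem_Times_iff mem_Collect_eq) blast
  with bij_betw_same_card[OF bij] show ?thesis unfolding descent_pair_count_def by simp
qed

lemma Collect_Times_eq_Sigma: "{p \<in> A \<times> B. P (fst p) (snd p)} = Sigma A (\<lambda>a. {b \<in> B. P a b})"
  by auto

lemma card_face_pairs_untwist:
  assumes y: "y \<in> sperms n"
  shows "card {p \<in> faces_of_type n J \<times> faces_of_type n K.
      tits_prod (tits_prod (face_act (chamber_perm n (fst p)) (snd p)) (fst p)) (fund_chamber n) = chamber n y}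
    = card {p \<in> faces_of_type n J \<times> faces_of_type n K.
      tits_prod (tits_prod (snd p) (fst p)) (fund_chamber n) = chamber n y}"
proof -
  let ?Q = "\<lambda>F G. tits_prod (tits_prod G F) (fund_chamber n) = chamber n y"
  have "card {G \<in> faces_of_type n K. ?Q F (face_act (chamber_perm n F) G)} = card {G \<in> faces_of_type n K. ?Q F G}"
    if F: "F \<in> faces_of_type n J" for F
  proof -
    have "chamber_perm n F \<in> sperms n" using chamber_perm(1) F unfolding faces_of_type_def by auto
    then have "bij_betw (face_act (chamber_perm n F)) (faces_of_type n K) (faces_of_type n K)"
      by (rule bij_betw_face_act_faces_of_type)
    then show ?thesis by (rule bij_betw_same_card[OF bij_betw_Collect]) simp
  qed
  moreover have "{p \<in> faces_of_type n J \<times> faces_of_type n K. ?Q (fst p) (face_act (chamber_perm n (fst p)) (snd p))}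
      = (SIGMA F:faces_of_type n J. {G \<in> faces_of_type n K. ?Q F (face_act (chamber_perm n F) G)})"
    and "{p \<in> faces_of_type n J \<times> faces_of_type n K. ?Q (fst p) (snd p)}
      = (SIGMA F:faces_of_type n J. {G \<in> faces_of_type n K. ?Q F G})"
    by (rule Collect_Times_eq_Sigma)+
  ultimately show ?thesis by (simp add: finite_faces_of_type)
qed

lemma card_face_pairs_eq_sum_tits_count:
  "card {p \<in> faces_of_type n J \<times> faces_of_type n K.
      tits_prod (tits_prod (snd p) (fst p)) (fund_chamber n) = chamber n y}
    = (\<Sum>H\<in>{H. is_face n H \<and> tits_prod H (fund_chamber n) = chamber n y}. tits_count n J K H)"
proof -
  let ?HS = "{H. is_face n H \<and> tits_prod H (fund_chamber n) = chamber n y}"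
  let ?Y = "\<lambda>H. {p \<in> faces_of_type n J \<times> faces_of_type n K. tits_prod (snd p) (fst p) = H}"
  have "{p \<in> faces_of_type n J \<times> faces_of_type n K. tits_prod (tits_prod (snd p) (fst p)) (fund_chamber n) = chamber n y}
      = (\<Union>H\<in>?HS. ?Y H)"
    using is_face_tits_prod unfolding faces_of_type_def by auto
  moreover have "card (\<Union>H\<in>?HS. ?Y H) = (\<Sum>H\<in>?HS. card (?Y H))"
  proof (rule card_UN_disjoint)
    show "finite ?HS"
      by (rule finite_subset[of _ "Pow (Omega n \<times> Omega n)"]) (auto simp: finite_Omega dest: is_face_subset)
  qed (use finite_faces_of_type in auto)
  ultimately show ?thesis unfolding tits_count_def by simp
qed

lemma faces_through_chamber:
  assumes n: "1 \<le> n" and y: "y \<in> sperms n"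
  shows "{H. is_face n H \<and> tits_prod H (fund_chamber n) = chamber n y}
    = (\<lambda>L. face_act y (std_face n L)) ` {L. L \<subseteq> {..<n} \<and> DesB n y \<subseteq> L}"
proof (intro set_eqI iffI)
  fix H assume "H \<in> {H. is_face n H \<and> tits_prod H (fund_chamber n) = chamber n y}"
  then have H: "is_face n H" and "chamber_perm n H = y"
    using chamber_perm_eqI[OF _ y] by auto
  then show "H \<in> (\<lambda>L. face_act y (std_face n L)) ` {L. L \<subseteq> {..<n} \<and> DesB n y \<subseteq> L}"
    using face_eq_act_std_face[OF H] DesB_chamber_perm_subset[OF H n] face_type_subset by blast
next
  fix H assume "H \<in> (\<lambda>L. face_act y (std_face n L)) ` {L. L \<subseteq> {..<n} \<and> DesB n y \<subseteq> L}"
  then obtain L where "L \<subseteq> {..<n}" "DesB n y \<subseteq> L" "H = face_act y (std_face n L)" by blast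
  then show "H \<in> {H. is_face n H \<and> tits_prod H (fund_chamber n) = chamber n y}"
    using act_std_face(1)[OF y] tits_prod_act_std_face_fund_chamber[OF y] by simp
qed

theorem descent_pair_count_eq:
  assumes n: "1 \<le> n" and J: "J \<subseteq> {..<n}" and K: "K \<subseteq> {..<n}" and y: "y \<in> sperms n"
  shows "descent_pair_count n J K y = (\<Sum>L\<in>{L. L \<subseteq> {..<n} \<and> DesB n y \<subseteq> L}. tits_count n J K (std_face n L))"
proof -
  let ?LS = "{L. L \<subseteq> {..<n} \<and> DesB n y \<subseteq> L}"
  have "inj_on (\<lambda>L. face_act y (std_face n L)) ?LS"
    using act_std_face(3)[OF y] by (intro inj_onI) (metis (no_types, lifting) mem_Collect_eq)
  moreover have "tits_count n J K (face_act y (std_face n L)) = tits_count n J K (std_face n L)"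
    if "L \<in> ?LS" for L
    using that finite_subset[of L "{..<n}"] by (intro tits_count_face_act[OF y is_face_std_face]) auto
  ultimately show ?thesis
    unfolding descent_pair_count_eq_card_face_pairs[OF n J K y] card_face_pairs_untwist[OF y]
      card_face_pairs_eq_sum_tits_count faces_through_chamber[OF n y]
    by (simp add: sum.reindex)
qed

section \<open>The peak algebra is a subalgebra\<close>

definition XB :: "nat \<Rightarrow> nat set \<Rightarrow> int list \<Rightarrow> rat" where
  "XB n J w = (if w \<in> sperms n \<and> DesB n w \<subseteq> J then 1 else 0)"

definition multB :: "nat \<Rightarrow> (int list \<Rightarrow> rat) \<Rightarrow> (int list \<Rightarrow> rat) \<Rightarrow> int list \<Rightarrow> rat" where
  "multB n a b y = (\<Sum>w\<in>sperms n. \<Sum>v\<in>sperms n. if scompose w v = y then a w * b v else 0)"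

lemma multB_add_left: "multB n (\<lambda>w. f w + g w) b = (\<lambda>y. multB n f b y + multB n g b y)"
proof -
  have "(if c then x + z else 0) = (if c then x else 0) + (if c then z else (0::rat))" for c x z by simp
  then show ?thesis by (intro ext) (simp add: multB_def distrib_right sum.distrib cong: if_cong)
qed

lemma multB_add_right: "multB n a (\<lambda>w. f w + g w) = (\<lambda>y. multB n a f y + multB n a g y)"
proof -
  have "(if c then x + z else 0) = (if c then x else 0) + (if c then z else (0::rat))" for c x z by simp
  then show ?thesis by (intro ext) (simp add: multB_def distrib_left sum.distrib cong: if_cong)
qed

lemma multB_smult_left: "multB n (\<lambda>w. c * f w) b = (\<lambda>y. c * multB n f b y)"
proof -
  have "(if P then c * x else 0) = c * (if P then x else (0::rat))" for P x by simp
  then show ?thesis by (intro ext) (simp add: multB_def mult.assoc sum_distrib_left cong: if_cong)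
qed

lemma multB_smult_right: "multB n a (\<lambda>w. c * f w) = (\<lambda>y. c * multB n a f y)"
proof -
  have "(if P then c * x else 0) = c * (if P then x else (0::rat))" for P x by simp
  then show ?thesis by (intro ext) (simp add: multB_def mult.left_commute sum_distrib_left cong: if_cong)
qed

lemma multB_zero_left: "multB n (\<lambda>w. 0) b = (\<lambda>y. 0)"
  by (intro ext) (simp add: multB_def cong: if_cong)

lemma multB_zero_right: "multB n a (\<lambda>w. 0) = (\<lambda>y. 0)"
  by (intro ext) (simp add: multB_def cong: if_cong)

lemma XB_eq_sum_YB:
  assumes "finite J"
  shows "XB n J = (\<lambda>w. \<Sum>G\<in>Pow J. 1 * YB n G w)"
proof
  fix w
  show "XB n J w = (\<Sum>G\<in>Pow J. 1 * YB n G w)"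
  proof (cases "w \<in> sperms n \<and> DesB n w \<subseteq> J")
    case True
    then have "(\<Sum>G\<in>Pow J. 1 * YB n G w) = (\<Sum>G\<in>Pow J. if G = DesB n w then 1 else 0)"
      unfolding YB_def by (intro sum.cong) auto
    with True assms show ?thesis unfolding XB_def by (simp add: sum.delta')
  next
    case False
    then have "(\<Sum>G\<in>Pow J. 1 * YB n G w) = 0" unfolding YB_def by (intro sum.neutral) auto
    with False show ?thesis unfolding XB_def by simp
  qed
qed

lemma SigmaB_subset_if_XB:
  assumes n: "1 \<le> n" and V: "lin_closed V" and XB: "\<And>K. K \<subseteq> {..<n} \<Longrightarrow> XB n K \<in> V"
  shows "SigmaB n \<subseteq> V"
proof
  have "YB n J \<in> V" if "J \<in> Pow {..<n}" for J
  proof (rule lin_closed_triangular[OF V _ _ _ that])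
    fix F assume "F \<in> Pow {..<n}"
    then have "finite F" and "XB n F \<in> V" using XB finite_subset by auto
    then show "\<exists>a. a F \<noteq> 0 \<and> (\<lambda>u. \<Sum>G\<in>Pow F. a G * YB n G u) \<in> V"
      using XB_eq_sum_YB by (intro exI[of _ "\<lambda>_. 1"]) auto
  qed (auto intro: finite_subset)
  moreover have "{0..n-1} = {..<n}" using n by auto
  ultimately show "f \<in> V" if "f \<in> SigmaB n" for f
    using that unfolding SigmaB_def by (auto intro: lin_closed_sum[OF V])
qed

lemma sum_sum_indicator_eq_card:
  assumes "finite A" and "finite B"
  shows "(\<Sum>a\<in>A. \<Sum>b\<in>B. if P a b then 1 else 0) = (of_nat (card {p \<in> A \<times> B. P (fst p) (snd p)}) :: rat)"
proof -
  have "(\<Sum>a\<in>A. \<Sum>b\<in>B. if P a b then 1 else 0) = (\<Sum>p\<in>A \<times> B. if P (fst p) (snd p) then 1 else (0::rat))"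
    by (simp add: sum.cartesian_product case_prod_beta)
  also have "\<dots> = of_nat (card {p \<in> A \<times> B. P (fst p) (snd p)})"
    using assms by (simp add: sum_indicator_eq_card)
  finally show ?thesis .
qed

lemma multB_XB:
  assumes n: "1 \<le> n" and J: "J \<subseteq> {..<n}" and K: "K \<subseteq> {..<n}"
  shows "multB n (XB n J) (XB n K) \<in> SigmaB n"
proof -
  have count: "multB n (XB n J) (XB n K) y = of_nat (descent_pair_count n J K y)" for y
  proof -
    have "multB n (XB n J) (XB n K) y = (\<Sum>w\<in>sperms n. \<Sum>v\<in>sperms n.
        if DesB n w \<subseteq> J \<and> DesB n v \<subseteq> K \<and> scompose w v = y then 1 else 0)"
      unfolding multB_def XB_def by (intro sum.cong refl) auto
    then show ?thesis
      unfolding descent_pair_count_def by (simp add: sum_sum_indicator_eq_card finite_sperms)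
  qed
  show ?thesis unfolding SigmaB_eq_class_fun
  proof (rule class_funI)
    fix y assume "y \<notin> sperms n"
    then have "{p \<in> sperms n \<times> sperms n. DesB n (fst p) \<subseteq> J \<and> DesB n (snd p) \<subseteq> K
        \<and> scompose (fst p) (snd p) = y} = {}"
      using scompose_in_sperms by auto
    then show "multB n (XB n J) (XB n K) y = 0"
      unfolding count descent_pair_count_def by (simp only: card.empty of_nat_0)
  next
    fix y y' assume "y \<in> sperms n" "y' \<in> sperms n" "DesB n y = DesB n y'"
    then show "multB n (XB n J) (XB n K) y = multB n (XB n J) (XB n K) y'"
      unfolding count using descent_pair_count_eq[OF n J K] by simp
  qed
qed

theorem SigmaB_multB_closed:
  assumes n: "1 \<le> n" and a: "a \<in> SigmaB n" and b: "b \<in> SigmaB n"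
  shows "multB n a b \<in> SigmaB n"
proof -
  have S: "lin_closed (SigmaB n)" unfolding SigmaB_eq_class_fun by (rule lin_closed_class_fun)
  have "lin_closed {b. \<forall>J. J \<subseteq> {..<n} \<longrightarrow> multB n (XB n J) b \<in> SigmaB n}"
    using lin_closedD[OF S] by (intro lin_closedI) (simp_all add: multB_add_right multB_smult_right multB_zero_right)
  then have right: "SigmaB n \<subseteq> {b. \<forall>J. J \<subseteq> {..<n} \<longrightarrow> multB n (XB n J) b \<in> SigmaB n}"
    using multB_XB[OF n] by (intro SigmaB_subset_if_XB[OF n]) auto
  have "lin_closed {a. \<forall>b\<in>SigmaB n. multB n a b \<in> SigmaB n}"
    using lin_closedD[OF S] by (intro lin_closedI) (simp_all add: multB_add_left multB_smult_left multB_zero_left)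
  then have "SigmaB n \<subseteq> {a. \<forall>b\<in>SigmaB n. multB n a b \<in> SigmaB n}"
    using right by (intro SigmaB_subset_if_XB[OF n]) auto
  with a b show ?thesis by blast
qed

lemma sum_perms_sum_sperms_fibre:
  "(\<Sum>u\<in>perms n. \<Sum>w\<in>{w \<in> sperms n. forget w = u}. h w) = (\<Sum>w\<in>sperms n. h w)"
  by (rule sum.group[OF finite_sperms finite_perms]) (use forget_in_perms in blast)

lemma multA_phi_eq:
  "multA n (phi n a) (phi n b) t
    = (\<Sum>w\<in>sperms n. \<Sum>v\<in>sperms n. if forget (scompose w v) = t then a w * b v else 0)"
proof -
  let ?fib = "\<lambda>u. {w \<in> sperms n. forget w = u}"
  define H where "H w v = (if compose (forget w) (forget v) = t then a w * b v else 0)" for w v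
  have "(if compose u u' = t then phi n a u * phi n b u' else 0) = (\<Sum>w\<in>?fib u. \<Sum>v\<in>?fib u'. H w v)"
    for u u'
    unfolding phi_def H_def by (auto simp: sum_product intro!: sum.neutral)
  then have "multA n (phi n a) (phi n b) t = (\<Sum>u\<in>perms n. \<Sum>u'\<in>perms n. \<Sum>w\<in>?fib u. \<Sum>v\<in>?fib u'. H w v)"
    unfolding multA_def by simp
  also have "\<dots> = (\<Sum>u\<in>perms n. \<Sum>w\<in>?fib u. \<Sum>u'\<in>perms n. \<Sum>v\<in>?fib u'. H w v)"
    by (subst sum.swap) simp
  also have "\<dots> = (\<Sum>w\<in>sperms n. \<Sum>v\<in>sperms n. H w v)"
    by (simp add: sum_perms_sum_sperms_fibre)
  finally show ?thesis
    unfolding H_def by (simp add: forget_scompose cong: sum.cong)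
qed

lemma phi_multB_eq:
  "phi n (multB n a b) t
    = (\<Sum>w\<in>sperms n. \<Sum>v\<in>sperms n. if forget (scompose w v) = t then a w * b v else 0)"
proof -
  let ?X = "\<lambda>y w v. if scompose w v = y then a w * b v else 0"
  have "phi n (multB n a b) t = (\<Sum>y\<in>{y \<in> sperms n. forget y = t}. \<Sum>w\<in>sperms n. \<Sum>v\<in>sperms n. ?X y w v)"
    unfolding phi_def multB_def ..
  also have "\<dots> = (\<Sum>w\<in>sperms n. \<Sum>y\<in>{y \<in> sperms n. forget y = t}. \<Sum>v\<in>sperms n. ?X y w v)"
    by (rule sum.swap)
  also have "\<dots> = (\<Sum>w\<in>sperms n. \<Sum>v\<in>sperms n. \<Sum>y\<in>{y \<in> sperms n. forget y = t}. ?X y w v)"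
    by (rule sum.cong[OF refl]) (rule sum.swap)
  also have "\<dots> = (\<Sum>w\<in>sperms n. \<Sum>v\<in>sperms n. if forget (scompose w v) = t then a w * b v else 0)"
    using scompose_in_sperms finite_sperms by (intro sum.cong refl) (simp add: sum.delta)
  finally show ?thesis .
qed

lemma multA_phi: "multA n (phi n a) (phi n b) = phi n (multB n a b)"
  by (rule ext) (simp only: multA_phi_eq phi_multB_eq)

lemma PeakAlg_multA_closed:
  assumes n: "1 \<le> n" and f: "f \<in> PeakAlg n" and g: "g \<in> PeakAlg n"
  shows "multA n f g \<in> PeakAlg n"
proof -
  have PeakAlg: "PeakAlg n = phi n ` SigmaB n"
    using PeakAlg_subset_phi_SigmaB[OF n] phi_SigmaB_subset_PeakAlg[OF n] by blast
  obtain a b where a: "a \<in> SigmaB n" "f = phi n a" and b: "b \<in> SigmaB n" "g = phi n b"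
    using f g unfolding PeakAlg by blast
  have "multA n f g = phi n (multB n a b)" unfolding a(2) b(2) by (rule multA_phi)
  with SigmaB_multB_closed[OF n a(1) b(1)] show ?thesis
    unfolding PeakAlg by simp
qed

theorem theorem4p2:
  fixes n :: nat
  assumes "n \<ge> 1"
  shows "PeakAlg n \<subseteq> SigmaA n
    \<and> unitA n \<in> PeakAlg n
    \<and> (\<forall>f\<in>PeakAlg n. \<forall>g\<in>PeakAlg n. multA n f g \<in> PeakAlg n)
    \<and> PeakAlg n = phi n ` SigmaB n
    \<and> PeakAlg n = psi n ` SigmaD n"
  using PeakAlg_subset_SigmaA unitA_in_PeakAlg PeakAlg_multA_closed[OF assms]
    PeakAlg_subset_phi_SigmaB[OF assms] phi_SigmaB_subset_PeakAlg[OF assms]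
    PeakAlg_subset_psi_SigmaD[OF assms] psi_SigmaD_subset_PeakAlg[OF assms]
  by blast

end
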